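(* Let $x_k(t)$ be smooth with $\dot x_k^2\ne1$, $\wp'(x_k)\neq0$, and $u_k=\wp(x_k)$. Then $$\frac{\ddot x_k}{\dot x_k^2-1}=\zeta(x_{k+1}+x_k)-\zeta(x_{k+1}-x_k)+\zeta(x_k+x_{k-1})+\zeta(x_k-x_{k-1})-2\zeta(2x_k)\quad\forall k$$ holds if and only if $$\frac{\ddot u_k-r'(u_k)/2}{\dot u_k^2-r(u_k)}=\frac{1}{u_k-u_{k+1}}+\frac1{u_k-u_{k-1}}\quad\forall k.$$
   Context: $\wp,\zeta$: Weierstrass functions with invariants $g_2,g_3$ (nondegenerate); $r(u)=4u^3-g_2u-g_3$. *)

theory Defs
  imports "HOL-Complex_Analysis.Complex_Analysis"
begin

definition lattice :: "complex \<Rightarrow> complex \<Rightarrow> complex set" where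
  "lattice w1 w2 = {of_int m * w1 + of_int n * w2 | m n. True}"

definition nondeg_periods :: "complex \<Rightarrow> complex \<Rightarrow> bool" where
  "nondeg_periods w1 w2 \<longleftrightarrow> w1 \<noteq> 0 \<and> Im (w2 / w1) \<noteq> 0"

definition wp :: "complex \<Rightarrow> complex \<Rightarrow> complex \<Rightarrow> complex" where
  "wp w1 w2 z = 1 / z ^ 2 +
     infsum (\<lambda>w. 1 / (z - w) ^ 2 - 1 / w ^ 2) (lattice w1 w2 - {0})"

definition wzeta :: "complex \<Rightarrow> complex \<Rightarrow> complex \<Rightarrow> complex" where
  "wzeta w1 w2 z = 1 / z +
     infsum (\<lambda>w. 1 / (z - w) + 1 / w + z / w ^ 2) (lattice w1 w2 - {0})"

definition g2 :: "complex \<Rightarrow> complex \<Rightarrow> complex" where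
  "g2 w1 w2 = 60 * infsum (\<lambda>w. 1 / w ^ 4) (lattice w1 w2 - {0})"

definition g3 :: "complex \<Rightarrow> complex \<Rightarrow> complex" where
  "g3 w1 w2 = 140 * infsum (\<lambda>w. 1 / w ^ 6) (lattice w1 w2 - {0})"

definition rpoly :: "complex \<Rightarrow> complex \<Rightarrow> complex \<Rightarrow> complex" where
  "rpoly w1 w2 u = 4 * u ^ 3 - g2 w1 w2 * u - g3 w1 w2"

definition rpoly' :: "complex \<Rightarrow> complex \<Rightarrow> complex \<Rightarrow> complex" where
  "rpoly' w1 w2 u = 12 * u ^ 2 - g2 w1 w2"

end

(* Put u = wp(x).  The chain rule gives u' = x' wp'(x) and u'' = x'' wp'(x) + x'^2 wp''(x), and with
   wp'^2 = r(wp), wp'' = r'(wp)/2 the left-hand side of the u-equation becomes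
   wp''/wp'^2 + x''/(wp' (x'^2 - 1)).  On the zeta side, the addition formula
   zeta(x + y) + zeta(x - y) - 2 zeta(x) = wp'(x)/(wp(x) - wp(y)) and the duplication formula
   zeta(2x) - 2 zeta(x) = wp''(x)/(2 wp'(x)) turn the right-hand side of the x-equation into
   wp'(x) (1/(u_k - u_(k+1)) + 1/(u_k - u_(k-1))) - wp''/wp'.  As wp'(x) is nonzero, the two
   equations are equivalent for every k and t.

   Absolute convergence over the
   lattice gives holomorphy and termwise derivatives, and Liouville's theorem shows that an elliptic
   function with only removable singularities is constant.  This gives the periodicity of wp, the
   differential equation (its defect tends to 0 at 0 by the Laurent expansion) and the addition
   formula (its defect is odd and has removable singularities); duplication is the limit y -> x of
   addition. *)

theory Submission
  imports Defs
begin

section \<open>Lattice sums over \<open>\<int>\<^sup>2\<close>\<close>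

definition box_norm :: "int \<times> int \<Rightarrow> int" where
  "box_norm p = max \<bar>fst p\<bar> \<bar>snd p\<bar>"

lemma box_norm_nonneg [simp]: "0 \<le> box_norm p"
  by (simp add: box_norm_def)

lemma box_norm_ge_1: "p \<noteq> (0, 0) \<Longrightarrow> 1 \<le> box_norm p"
  by (cases p) (auto simp: box_norm_def max_def)

lemma box_sphere_subset: "{p. box_norm p = k} \<subseteq> {-k..k} \<times> {-k, k} \<union> {-k, k} \<times> {-k..k}"
  by (auto simp: box_norm_def max_def split: if_splits)

lemma finite_box_sphere: "finite {p. box_norm p = k}"
  by (rule finite_subset[OF box_sphere_subset]) auto

lemma card_box_sphere_le:
  assumes "k \<ge> 1"
  shows "real (card {p. box_norm p = k}) \<le> 12 * real_of_int k"
proof -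
  have "card {p. box_norm p = k} \<le> card ({-k..k} \<times> {-k, k} \<union> {-k, k} \<times> {-k..k})"
    by (rule card_mono[OF _ box_sphere_subset]) auto
  also have "\<dots> \<le> card ({-k..k} \<times> {-k, k}) + card ({-k, k} \<times> {-k..k})"
    by (rule card_Un_le)
  also have "\<dots> \<le> nat (2 * k + 1) * 2 + 2 * nat (2 * k + 1)"
  proof -
    have "card {-k, k} \<le> 2"
      by (rule order_trans[OF card_insert_le_m1]) auto
    then show ?thesis
      by (simp only: card_cartesian_product card_atLeastAtMost_int) (intro add_mono mult_mono; simp)
  qed
  finally show ?thesis
    using assms by linarith
qed

definition punctured_box :: "nat \<Rightarrow> (int \<times> int) set" where
  "punctured_box K = {p. 1 \<le> box_norm p \<and> box_norm p \<le> int K}"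

lemma finite_punctured_box: "finite (punctured_box K)"
proof (rule finite_subset)
  show "punctured_box K \<subseteq> {-int K..int K} \<times> {-int K..int K}"
    by (auto simp: punctured_box_def box_norm_def max_def split: if_splits)
qed auto

lemma sum_punctured_box_le:
  "(\<Sum>p\<in>punctured_box K. 1 / real_of_int (box_norm p) ^ 3) \<le> 24 - 24 / (real K + 1)"
proof (induction K)
  case 0
  have "punctured_box 0 = {}"
    by (auto simp: punctured_box_def)
  then show ?case
    by simp
next
  case (Suc K)
  let ?f = "\<lambda>p. 1 / real_of_int (box_norm p) ^ 3"
  have split: "punctured_box (Suc K) = punctured_box K \<union> {p. box_norm p = int K + 1}"
    and disjoint: "punctured_box K \<inter> {p. box_norm p = int K + 1} = {}"
    by (auto simp: punctured_box_def)
  have "(\<Sum>p\<in>{p. box_norm p = int K + 1}. ?f p)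
      = real (card {p. box_norm p = int K + 1}) / (real K + 1) ^ 3"
    by (subst sum.cong[OF refl, of _ _ "\<lambda>_. 1 / (real K + 1) ^ 3"]) auto
  also have "\<dots> \<le> 12 * (real K + 1) / (real K + 1) ^ 3"
    using card_box_sphere_le[of "int K + 1"] by (intro divide_right_mono) auto
  also have "\<dots> \<le> 24 / (real K + 1) - 24 / (real K + 2)"
  proof -
    define a where "a = real K + 1"
    have a: "a \<ge> 1"
      by (simp add: a_def)
    then have "12 * a / a ^ 3 = 12 / a ^ 2"
      by (simp add: power2_eq_square power3_eq_cube)
    also have "\<dots> \<le> 24 / (a * (a + 1))"
      using a by (simp add: divide_simps power2_eq_square)
    also have "\<dots> = 24 / a - 24 / (a + 1)"
      using a by (simp add: field_simps)
    finally show ?thesis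
      by (simp add: a_def add.assoc)
  qed
  finally have "(\<Sum>p\<in>{p. box_norm p = int K + 1}. ?f p) \<le> 24 / (real K + 1) - 24 / (real K + 2)" .
  moreover have "(\<Sum>p\<in>punctured_box (Suc K). ?f p)
      = (\<Sum>p\<in>punctured_box K. ?f p) + (\<Sum>p\<in>{p. box_norm p = int K + 1}. ?f p)"
    unfolding split by (rule sum.union_disjoint[OF finite_punctured_box finite_box_sphere disjoint])
  moreover have "24 / (real (Suc K) + 1) = 24 / (real K + 2)"
    by simp
  ultimately show ?case
    using Suc.IH by linarith
qed

lemma inverse_box_norm_cube_summable:
  "(\<lambda>p. 1 / real_of_int (box_norm p) ^ 3) summable_on (UNIV - {(0, 0)})"
proof (rule nonneg_bdd_above_summable_on)
  show "bdd_above (sum (\<lambda>p. 1 / real_of_int (box_norm p) ^ 3) ` {F. F \<subseteq> UNIV - {(0, 0)} \<and> finite F})"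
  proof (rule bdd_aboveI, safe)
    fix F :: "(int \<times> int) set"
    assume F: "F \<subseteq> UNIV - {(0, 0)}" "finite F"
    obtain M where M: "\<And>p. p \<in> F \<Longrightarrow> box_norm p \<le> M"
      using bdd_above_finite[OF finite_imageI[OF F(2), of box_norm]] by (auto simp: bdd_above_def)
    have "F \<subseteq> punctured_box (nat M)"
    proof
      fix p assume "p \<in> F"
      then show "p \<in> punctured_box (nat M)"
        using F(1) M[of p] box_norm_ge_1[of p] by (force simp: punctured_box_def)
    qed
    then have "(\<Sum>p\<in>F. 1 / real_of_int (box_norm p) ^ 3)
        \<le> (\<Sum>p\<in>punctured_box (nat M). 1 / real_of_int (box_norm p) ^ 3)"
      by (intro sum_mono2 finite_punctured_box) simp_all
    also have "\<dots> \<le> 24"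
      using sum_punctured_box_le[of "nat M"] zero_le_divide_iff[of 24 "real (nat M) + 1"] by linarith
    finally show "(\<Sum>p\<in>F. 1 / real_of_int (box_norm p) ^ 3) \<le> 24" .
  qed
qed simp

lemma locally_finite_isolated:
  fixes S :: "'a::metric_space set"
  assumes "finite (S \<inter> cball z 1)"
  shows "\<exists>r>0. \<forall>y\<in>S. y \<noteq> z \<longrightarrow> r \<le> dist z y"
proof -
  obtain d where d: "d > 0" "\<forall>x\<in>S \<inter> cball z 1. x \<noteq> z \<longrightarrow> d \<le> dist z x"
    using finite_set_avoid[OF assms, of z] by blast
  show ?thesis
  proof (intro exI[of _ "min d 1"] conjI ballI impI)
    fix y assume "y \<in> S" "y \<noteq> z"
    then show "min d 1 \<le> dist z y"
      using d by (cases "dist z y \<le> 1") (auto simp: dist_commute)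
  qed (use d in auto)
qed

lemma eventually_notin_locally_finite:
  fixes S :: "'a::metric_space set"
  assumes "finite (S \<inter> cball z 1)"
  shows "eventually (\<lambda>x. x \<notin> S) (at z)"
proof -
  obtain r where "r > 0" "\<forall>y\<in>S. y \<noteq> z \<longrightarrow> r \<le> dist z y"
    using locally_finite_isolated[OF assms] by blast
  then show ?thesis
    unfolding eventually_at by (intro exI[of _ r]) (auto simp: dist_commute)
qed

lemma open_Compl_locally_finite:
  fixes S :: "'a::metric_space set"
  assumes "\<And>z. finite (S \<inter> cball z 1)"
  shows "open (- S)"
  unfolding open_contains_ball
proof
  fix z assume "z \<in> - S"
  moreover obtain r where "r > 0" "\<forall>y\<in>S. y \<noteq> z \<longrightarrow> r \<le> dist z y"
    using locally_finite_isolated[OF assms] by blast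
  ultimately show "\<exists>e>0. ball z e \<subseteq> - S"
    by (intro exI[of _ r]) auto
qed

lemma tendsto_shift_periodic:
  fixes f :: "'a::real_normed_vector \<Rightarrow> 'b::topological_space"
  assumes "\<And>z. finite (E \<inter> cball z 1)"
    and "\<And>z. z + \<omega> \<in> E \<longleftrightarrow> z \<in> E"
    and "\<And>z. z \<notin> E \<Longrightarrow> f (z + \<omega>) = f z"
    and "(f \<longlongrightarrow> l) (at e)"
  shows "(f \<longlongrightarrow> l) (at (e + \<omega>))"
proof -
  have "((\<lambda>x. f (x - \<omega>)) \<longlongrightarrow> l) (at (e + \<omega>))"
    using LIM_offset[OF assms(4), of "- \<omega>"] by simp
  moreover have "eventually (\<lambda>x. f (x - \<omega>) = f x) (at (e + \<omega>))"
    using eventually_notin_locally_finite[OF assms(1)[of "e + \<omega>"]]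
  proof eventually_elim
    case (elim x)
    then show ?case
      using assms(2)[of "x - \<omega>"] assms(3)[of "x - \<omega>"] by simp
  qed
  ultimately show ?thesis
    by (rule tendsto_cong[THEN iffD1, rotated])
qed

lemma infsum_has_field_derivative:
  fixes f f' :: "'a \<Rightarrow> complex \<Rightarrow> complex"
  assumes r: "r > 0"
    and der: "\<And>w z. w \<in> A \<Longrightarrow> z \<in> cball z0 r \<Longrightarrow> (f w has_field_derivative f' w z) (at z)"
    and M: "M summable_on A"
    and bound: "\<And>w z. w \<in> A \<Longrightarrow> z \<in> cball z0 r \<Longrightarrow> norm (f w z) \<le> M w"
  shows "((\<lambda>z. \<Sum>\<^sub>\<infinity>w\<in>A. f w z) has_field_derivative (\<Sum>\<^sub>\<infinity>w\<in>A. f' w z0)) (at z0)"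
proof -
  have lim: "uniform_limit (cball z0 r) (\<lambda>X z. \<Sum>w\<in>X. f w z) (\<lambda>z. \<Sum>\<^sub>\<infinity>w\<in>A. f w z)
      (finite_subsets_at_top A)"
    using bound M by (rule Weierstrass_m_test_general)
  have "\<forall>\<^sub>F X in finite_subsets_at_top A. continuous_on (cball z0 r) (\<lambda>z. \<Sum>w\<in>X. f w z) \<and>
      (\<forall>z\<in>ball z0 r. ((\<lambda>z. \<Sum>w\<in>X. f w z) has_field_derivative (\<Sum>w\<in>X. f' w z)) (at z))"
  proof (rule eventually_finite_subsets_at_top_weakI, intro conjI ballI)
    fix X assume X: "finite X" "X \<subseteq> A"
    show "continuous_on (cball z0 r) (\<lambda>z. \<Sum>w\<in>X. f w z)"
      using der X by (intro continuous_on_sum continuous_at_imp_continuous_on ballI)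
        (meson DERIV_isCont subsetD)
    show "((\<lambda>z. \<Sum>w\<in>X. f w z) has_field_derivative (\<Sum>w\<in>X. f' w z)) (at z)"
      if "z \<in> ball z0 r" for z
      using der X that by (intro DERIV_sum) auto
  qed
  from has_complex_derivative_uniform_limit[OF this lim _ r]
  obtain g' where g': "\<And>z. z \<in> ball z0 r \<Longrightarrow>
      ((\<lambda>z. \<Sum>\<^sub>\<infinity>w\<in>A. f w z) has_field_derivative g' z) (at z) \<and>
      ((\<lambda>X. \<Sum>w\<in>X. f' w z) \<longlongrightarrow> g' z) (finite_subsets_at_top A)"
    using finite_subsets_at_top_neq_bot by (metis trivial_limit_def)
  have z0: "z0 \<in> ball z0 r"
    using r by simp
  have "infsum (\<lambda>w. f' w z0) A = g' z0"
    using g'[OF z0] by (intro infsumI) (simp add: has_sum_def)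
  then show ?thesis
    using g'[OF z0] by simp
qed

lemma Bfun_add:
  fixes f g :: "'a \<Rightarrow> 'b::real_normed_vector"
  assumes "Bfun f F" "Bfun g F"
  shows "Bfun (\<lambda>x. f x + g x) F"
proof -
  obtain A B where A: "A > 0" "eventually (\<lambda>x. norm (f x) \<le> A) F"
    and B: "B > 0" "eventually (\<lambda>x. norm (g x) \<le> B) F"
    using assms by (auto elim!: BfunE)
  have "eventually (\<lambda>x. norm (f x + g x) \<le> A + B) F"
    using A(2) B(2) by eventually_elim (rule order_trans[OF norm_triangle_ineq], simp add: add_mono)
  then show ?thesis
    using A B by (intro BfunI) auto
qed

lemma Bfun_mult:
  fixes f g :: "'a \<Rightarrow> 'b::real_normed_algebra"
  assumes "Bfun f F" "Bfun g F"
  shows "Bfun (\<lambda>x. f x * g x) F"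
proof -
  obtain A B where A: "A > 0" "eventually (\<lambda>x. norm (f x) \<le> A) F"
    and B: "B > 0" "eventually (\<lambda>x. norm (g x) \<le> B) F"
    using assms by (auto elim!: BfunE)
  have "eventually (\<lambda>x. norm (f x * g x) \<le> A * B) F"
    using A(2) B(2)
    by eventually_elim (rule order_trans[OF norm_mult_ineq], intro mult_mono, use A in auto)
  then show ?thesis
    using A B by (intro BfunI) auto
qed

lemma Bfun_uminus:
  fixes f :: "'a \<Rightarrow> 'b::real_normed_vector"
  shows "Bfun f F \<Longrightarrow> Bfun (\<lambda>x. - f x) F"
  unfolding Bfun_def by simp

lemma Bfun_diff:
  fixes f g :: "'a \<Rightarrow> 'b::real_normed_vector"
  shows "Bfun f F \<Longrightarrow> Bfun g F \<Longrightarrow> Bfun (\<lambda>x. f x - g x) F"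
  using Bfun_add[of f F "\<lambda>x. - g x"] Bfun_uminus[of g F] by simp

lemma Bfun_power:
  fixes f :: "'a \<Rightarrow> 'b::real_normed_algebra_1"
  shows "Bfun f F \<Longrightarrow> Bfun (\<lambda>x. f x ^ n) F"
  by (induction n) (auto intro: Bfun_mult)

lemma Bfun_ident_at: "Bfun (\<lambda>x::'a::real_normed_vector. x) (at a)"
proof (rule BfunI)
  show "eventually (\<lambda>x. norm x \<le> norm a + 1) (at a)"
    unfolding eventually_at
    by (intro exI[of _ 1]) (auto simp: dist_norm intro: order_trans[OF norm_triangle_sub[of _ a]])
qed

lemmas Bfun_intros = Bfun_add Bfun_diff Bfun_mult Bfun_uminus Bfun_power Bfun_const Bfun_ident_at

lemma second_difference_quotient_tendsto:
  assumes hol: "f holomorphic_on S" and S: "open S" and a: "a \<in> S"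
  shows "((\<lambda>x. (f x - f a - deriv f a * (x - a)) / (x - a)^2) \<longlongrightarrow> deriv (deriv f) a / 2) (at a)"
proof -
  define g where "g z = (if z = a then deriv f a else (f z - f a) / (z - a))" for z
  have holg: "g holomorphic_on S"
    unfolding g_def[abs_def] by (rule pole_lemma[OF hol]) (simp add: interior_open[OF S] a)
  have "((\<lambda>x. (g x - g a) / (x - a)) \<longlongrightarrow> deriv g a) (at a)"
    using holomorphic_derivI[OF holg S a] by (simp add: has_field_derivative_iff)
  moreover have "eventually (\<lambda>x. (g x - g a) / (x - a) = (f x - f a - deriv f a * (x - a)) / (x - a)^2) (at a)"
    unfolding eventually_at by (rule exI[of _ 1]) (auto simp: g_def field_simps power2_eq_square)
  ultimately have lim: "((\<lambda>x. (f x - f a - deriv f a * (x - a)) / (x - a)^2) \<longlongrightarrow> deriv g a) (at a)"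
    by (rule tendsto_cong[THEN iffD1, rotated])
  have f_eq: "f = (\<lambda>z. f a + (z - a) * g z)"
    by (auto simp: g_def)
  have deriv_f: "deriv f z = g z + (z - a) * deriv g z" if "z \<in> S" for z
  proof -
    have "(f has_field_derivative g z + (z - a) * deriv g z) (at z)"
      by (subst f_eq) (auto intro!: derivative_eq_intros holomorphic_derivI[OF holg S that])
    then show ?thesis
      by (rule DERIV_imp_deriv)
  qed
  have "((\<lambda>z. g z + (z - a) * deriv g z) has_field_derivative 2 * deriv g a) (at a)"
    by (auto intro!: derivative_eq_intros holomorphic_derivI[OF holg S a]
        holomorphic_derivI[OF holomorphic_deriv[OF holg S] S a])
  then have "(deriv f has_field_derivative 2 * deriv g a) (at a)"
    by (rule has_field_derivative_transform_within_open[OF _ S a]) (simp add: deriv_f)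
  then have "deriv (deriv f) a = 2 * deriv g a"
    by (rule DERIV_imp_deriv)
  then show ?thesis
    using lim by simp
qed

lemma holomorphic_extension_locally_finite:
  assumes fin: "\<And>z. finite (E \<inter> cball z 1)"
    and hol: "f holomorphic_on - E"
    and lim: "\<And>e. e \<in> E \<Longrightarrow> (f \<longlongrightarrow> F e) (at e)"
    and ext: "\<And>z. z \<notin> E \<Longrightarrow> F z = f z"
  shows "F holomorphic_on UNIV"
proof -
  have "F field_differentiable (at z)" for z
  proof -
    obtain r where r: "r > 0" "\<forall>y\<in>E. y \<noteq> z \<longrightarrow> r \<le> dist z y"
      using locally_finite_isolated[OF fin] by blast
    define B where "B = ball z r"
    have punctured: "B - {z} \<subseteq> - E"
      using r by (auto simp: B_def)
    have hol_punctured: "F holomorphic_on B - {z}"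
      by (rule holomorphic_transform[OF holomorphic_on_subset[OF hol punctured]])
        (use punctured ext in auto)
    have "eventually (\<lambda>x. f x = F x) (at z)"
      using eventually_notin_locally_finite[OF fin[of z]] by eventually_elim (simp add: ext)
    moreover have "(f \<longlongrightarrow> F z) (at z)"
    proof (cases "z \<in> E")
      case False
      then have "isCont f z"
        using hol open_Compl_locally_finite[OF fin]
        by (meson ComplI holomorphic_on_imp_continuous_on continuous_on_eq_continuous_at)
      then show ?thesis
        using False ext by (simp add: isCont_def)
    qed (rule lim)
    ultimately have lim_z: "(F \<longlongrightarrow> F z) (at z)"
      by (rule tendsto_cong[THEN iffD1])
    have "F holomorphic_on B"
    proof (rule no_isolated_singularity'[of "{z}"])
      show "(F \<longlongrightarrow> F x) (at x within B)" if "x \<in> {z}" for x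
        using lim_z that by (auto intro: tendsto_within_subset)
    qed (use hol_punctured in \<open>auto simp: B_def\<close>)
    then show ?thesis
      using r by (intro holomorphic_on_imp_differentiable_at[of F B]) (auto simp: B_def)
  qed
  then show ?thesis
    by (simp add: holomorphic_on_def field_differentiable_at_within)
qed

lemma tendsto_at_uminus_odd:
  fixes f :: "'a::real_normed_vector \<Rightarrow> 'b::real_normed_vector"
  assumes "(f \<longlongrightarrow> l) (at a)" "eventually (\<lambda>z. f (- z) = - f z) (at (- a))"
  shows "(f \<longlongrightarrow> - l) (at (- a))"
proof -
  have "((f \<circ> uminus) \<longlongrightarrow> l) (at (- a))"
    unfolding tendsto_compose_filtermap using assms(1) filtermap_at_minus[of "- a"] by simp
  then have "((\<lambda>z. f (- z)) \<longlongrightarrow> l) (at (- a))"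
    by (simp add: o_def)
  then have "((\<lambda>z. - f (- z)) \<longlongrightarrow> - l) (at (- a))"
    by (rule tendsto_minus)
  moreover have "eventually (\<lambda>z. - f (- z) = f z) (at (- a))"
    using assms(2) by eventually_elim simp
  ultimately show ?thesis
    by (rule tendsto_cong[THEN iffD1, rotated])
qed

section \<open>The period lattice\<close>

locale period_lattice =
  fixes w1 w2 :: complex
  assumes nondeg: "nondeg_periods w1 w2"
begin

abbreviation \<Lambda> :: "complex set" where
  "\<Lambda> \<equiv> lattice w1 w2"

definition period_det :: real where
  "period_det = Im (cnj w1 * w2)"

lemma w1_nonzero: "w1 \<noteq> 0" and period_det_nonzero: "period_det \<noteq> 0"
  using nondeg by (auto simp: nondeg_periods_def period_det_def Im_divide algebra_simps)

lemma Im_cnj_w1_combination: "Im (cnj w1 * (of_real a * w1 + of_real b * w2)) = b * period_det"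
  and Im_cnj_w2_combination: "Im (cnj w2 * (of_real a * w1 + of_real b * w2)) = - a * period_det"
  by (simp_all add: period_det_def algebra_simps)

definition \<delta> :: real where
  "\<delta> = \<bar>period_det\<bar> / (cmod w1 + cmod w2)"

lemma delta_pos: "\<delta> > 0"
  using period_det_nonzero w1_nonzero unfolding \<delta>_def by (simp add: add_pos_nonneg)

lemma coeff_le_norm:
  assumes "z = of_real a * w1 + of_real b * w2"
  shows "\<delta> * \<bar>a\<bar> \<le> cmod z" "\<delta> * \<bar>b\<bar> \<le> cmod z"
proof -
  have pos: "cmod w1 + cmod w2 > 0"
    using w1_nonzero by (simp add: add_pos_nonneg)
  have "\<bar>b\<bar> * \<bar>period_det\<bar> = \<bar>Im (cnj w1 * z)\<bar>"
    using Im_cnj_w1_combination[of a b] assms by (simp add: abs_mult)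
  also have "\<dots> \<le> cmod w1 * cmod z"
    using abs_Im_le_cmod[of "cnj w1 * z"] by (simp add: norm_mult)
  also have "\<dots> \<le> (cmod w1 + cmod w2) * cmod z"
    by (intro mult_right_mono) auto
  finally show "\<delta> * \<bar>b\<bar> \<le> cmod z"
    using pos unfolding \<delta>_def by (simp add: field_simps)
  have "\<bar>a\<bar> * \<bar>period_det\<bar> = \<bar>Im (cnj w2 * z)\<bar>"
    using Im_cnj_w2_combination[of a b] assms by (simp add: abs_mult)
  also have "\<dots> \<le> cmod w2 * cmod z"
    using abs_Im_le_cmod[of "cnj w2 * z"] by (simp add: norm_mult)
  also have "\<dots> \<le> (cmod w1 + cmod w2) * cmod z"
    by (intro mult_right_mono) auto
  finally show "\<delta> * \<bar>a\<bar> \<le> cmod z"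
    using pos unfolding \<delta>_def by (simp add: field_simps)
qed

lemma real_independent:
  assumes "of_real a * w1 + of_real b * w2 = 0"
  shows "a = 0" "b = 0"
  using coeff_le_norm[OF assms[symmetric]] delta_pos by (simp_all add: mult_le_0_iff)

lemma real_coordinates:
  obtains a b where "z = of_real a * w1 + of_real b * w2"
proof -
  define a where "a = - Im (cnj w2 * z) / period_det"
  define b where "b = Im (cnj w1 * z) / period_det"
  define u where "u = z - (of_real a * w1 + of_real b * w2)"
  have "Im (cnj w1 * u) = 0"
    unfolding u_def using Im_cnj_w1_combination[of a b] period_det_nonzero
    by (simp add: b_def right_diff_distrib)
  moreover have "Im (cnj w2 * u) = 0"
    unfolding u_def using Im_cnj_w2_combination[of a b] period_det_nonzero
    by (simp add: a_def right_diff_distrib)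
  ultimately have e1: "Re w1 * Im u - Im w1 * Re u = 0" and e2: "Re w2 * Im u - Im w2 * Re u = 0"
    by simp_all
  have "Re u * period_det = 0"
    unfolding period_det_def using e1 e2 by simp algebra
  moreover have "Im u * period_det = 0"
    unfolding period_det_def using e1 e2 by simp algebra
  ultimately have "u = 0"
    using period_det_nonzero by (simp add: complex_eq_iff)
  then show ?thesis
    using that[of a b] by (simp add: u_def)
qed

definition lattice_point :: "int \<times> int \<Rightarrow> complex" where
  "lattice_point p = of_int (fst p) * w1 + of_int (snd p) * w2"

lemma lattice_eq_range: "\<Lambda> = range lattice_point"
  unfolding lattice_def lattice_point_def by (auto simp: image_def)

lemma lattice_point_norm_ge: "\<delta> * real_of_int (box_norm p) \<le> cmod (lattice_point p)"
proof -
  have "lattice_point p = of_real (of_int (fst p)) * w1 + of_real (of_int (snd p)) * w2"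
    by (simp add: lattice_point_def)
  from coeff_le_norm[OF this] show ?thesis
    by (simp add: box_norm_def max_def)
qed

lemma inj_lattice_point: "inj lattice_point"
proof (rule injI)
  fix p q assume "lattice_point p = lattice_point q"
  then have "of_real (of_int (fst p - fst q)) * w1 + of_real (of_int (snd p - snd q)) * w2 = 0"
    by (simp add: lattice_point_def algebra_simps)
  from real_independent[OF this] show "p = q"
    by (simp add: prod_eq_iff)
qed

lemma bij_betw_lattice_point: "bij_betw lattice_point (UNIV - {(0, 0)}) (\<Lambda> - {0})"
proof -
  have "lattice_point (0, 0) = 0"
    by (simp add: lattice_point_def)
  moreover have "lattice_point ` (UNIV - {(0, 0)}) = range lattice_point - {lattice_point (0, 0)}"
    using inj_lattice_point by (auto simp: inj_eq)
  ultimately show ?thesis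
    unfolding bij_betw_def lattice_eq_range using inj_lattice_point by (auto intro: inj_on_subset)
qed

lemma countable_lattice: "countable \<Lambda>"
  unfolding lattice_eq_range by simp

lemma zero_in_lattice: "0 \<in> \<Lambda>" and w1_in_lattice: "w1 \<in> \<Lambda>" and w2_in_lattice: "w2 \<in> \<Lambda>"
proof -
  have "0 = of_int 0 * w1 + of_int 0 * w2" "w1 = of_int 1 * w1 + of_int 0 * w2"
    "w2 = of_int 0 * w1 + of_int 1 * w2"
    by simp_all
  then show "0 \<in> \<Lambda>" "w1 \<in> \<Lambda>" "w2 \<in> \<Lambda>"
    unfolding lattice_def by blast+
qed

lemma lattice_add: "a \<in> \<Lambda> \<Longrightarrow> b \<in> \<Lambda> \<Longrightarrow> a + b \<in> \<Lambda>"
  unfolding lattice_def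
  by clarify (rule_tac x="m + ma" in exI, rule_tac x="n + na" in exI, simp add: algebra_simps)

lemma lattice_uminus: "a \<in> \<Lambda> \<Longrightarrow> - a \<in> \<Lambda>"
  unfolding lattice_def
  by clarify (rule_tac x="- m" in exI, rule_tac x="- n" in exI, simp add: algebra_simps)

lemma lattice_diff: "a \<in> \<Lambda> \<Longrightarrow> b \<in> \<Lambda> \<Longrightarrow> a - b \<in> \<Lambda>"
  using lattice_add[OF _ lattice_uminus, of a b] by simp

lemma uminus_in_lattice_iff: "- a \<in> \<Lambda> \<longleftrightarrow> a \<in> \<Lambda>"
  using lattice_uminus[of a] lattice_uminus[of "- a"] by auto

lemma add_in_lattice_iff: "\<omega> \<in> \<Lambda> \<Longrightarrow> z + \<omega> \<in> \<Lambda> \<longleftrightarrow> z \<in> \<Lambda>"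
  using lattice_diff[of "z + \<omega>" \<omega>] lattice_add[of z \<omega>] by auto

lemma lattice_norm_ge:
  assumes "w \<in> \<Lambda>" "w \<noteq> 0"
  shows "\<delta> \<le> cmod w"
proof -
  have "lattice_point (0, 0) = 0"
    by (simp add: lattice_point_def)
  then obtain p where p: "w = lattice_point p" "p \<noteq> (0, 0)"
    using assms unfolding lattice_eq_range by auto
  then have "\<delta> * 1 \<le> \<delta> * real_of_int (box_norm p)"
    using box_norm_ge_1[of p] delta_pos by (intro mult_left_mono) auto
  then show ?thesis
    using lattice_point_norm_ge[of p] p by simp
qed

lemma finite_lattice_cball: "finite (\<Lambda> \<inter> cball z R)"
proof -
  define N where "N = \<lceil>(cmod z + R) / \<delta>\<rceil>"
  have "\<Lambda> \<inter> cball z R \<subseteq> lattice_point ` ({-N..N} \<times> {-N..N})"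
  proof
    fix w assume w: "w \<in> \<Lambda> \<inter> cball z R"
    then obtain p where p: "w = lattice_point p"
      unfolding lattice_eq_range by auto
    have "cmod w \<le> cmod z + R"
      using w norm_triangle_ineq2[of w z] by (auto simp: dist_norm norm_minus_commute)
    then have "\<delta> * real_of_int (box_norm p) \<le> cmod z + R"
      using lattice_point_norm_ge[of p] p by simp
    then have "real_of_int (box_norm p) \<le> (cmod z + R) / \<delta>"
      using delta_pos by (simp add: field_simps)
    then have "box_norm p \<le> N"
      unfolding N_def by linarith
    then have "p \<in> {-N..N} \<times> {-N..N}"
      by (cases p) (auto simp: box_norm_def)
    then show "w \<in> lattice_point ` ({-N..N} \<times> {-N..N})"
      using p by auto
  qed
  then show ?thesis
    by (rule finite_subset) auto
qed

lemma open_Compl_lattice: "open (- \<Lambda>)"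
  by (rule open_Compl_locally_finite[OF finite_lattice_cball])

lemma open_Compl_lattice_nonzero: "open (- (\<Lambda> - {0}))"
proof -
  have "- (\<Lambda> - {0}) = - \<Lambda> \<union> ball 0 \<delta>"
    using lattice_norm_ge delta_pos by force
  then show ?thesis
    using open_Compl_lattice by auto
qed

lemma connected_Compl_lattice: "connected (- \<Lambda>)"
  using connected_open_diff_countable[of UNIV \<Lambda>] countable_lattice
  by (simp add: Compl_eq_Diff_UNIV connected_UNIV)

lemma lattice_inverse_power_summable:
  assumes "n \<ge> 3"
  shows "(\<lambda>w. 1 / cmod w ^ n) summable_on (\<Lambda> - {0})"
proof -
  have "(\<lambda>p. 1 / cmod (lattice_point p) ^ n) summable_on (UNIV - {(0, 0)})"
  proof (rule summable_on_comparison_test)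
    show "(\<lambda>p. (1 / \<delta> ^ n) * (1 / real_of_int (box_norm p) ^ 3)) summable_on (UNIV - {(0, 0)})"
      by (rule summable_on_cmult_right[OF inverse_box_norm_cube_summable])
  next
    fix p :: "int \<times> int" assume "p \<in> UNIV - {(0, 0)}"
    then have k: "1 \<le> box_norm p"
      by (intro box_norm_ge_1) auto
    then have pos: "0 < \<delta> * real_of_int (box_norm p)"
      using delta_pos by simp
    have "real_of_int (box_norm p) ^ 3 \<le> real_of_int (box_norm p) ^ n"
      using k assms by (intro power_increasing) auto
    then have "\<delta> ^ n * real_of_int (box_norm p) ^ 3 \<le> cmod (lattice_point p) ^ n"
      using pos lattice_point_norm_ge[of p] delta_pos
      by (intro order_trans[OF _ power_mono[OF lattice_point_norm_ge]])
        (auto simp: power_mult_distrib intro!: mult_left_mono)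
    moreover have "0 < \<delta> ^ n * real_of_int (box_norm p) ^ 3"
      using k delta_pos by simp
    ultimately have "1 / cmod (lattice_point p) ^ n \<le> 1 / (\<delta> ^ n * real_of_int (box_norm p) ^ 3)"
      by (intro frac_le) auto
    then show "1 / cmod (lattice_point p) ^ n \<le> (1 / \<delta> ^ n) * (1 / real_of_int (box_norm p) ^ 3)"
      by simp
  qed simp
  then show ?thesis
    using summable_on_reindex_bij_betw[OF bij_betw_lattice_point, of "\<lambda>w. 1 / cmod w ^ n"] by simp
qed

lemma half_period_notin_lattice: "w1 / 2 \<notin> \<Lambda>" "w2 / 2 \<notin> \<Lambda>"
proof -
  have not_half_integer: False if "1/2 - of_int m = (0::real)" for m :: int
  proof -
    have "real_of_int (2 * m) = real_of_int 1"
      using that by simp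
    then have "2 * m = 1"
      by (simp only: of_int_eq_iff)
    then show False
      by presburger
  qed
  show "w1 / 2 \<notin> \<Lambda>"
  proof
    assume "w1 / 2 \<in> \<Lambda>"
    then obtain m n where "w1 / 2 = of_int m * w1 + of_int n * w2"
      unfolding lattice_def by auto
    then have "1/2 - of_int m = (0::real)"
      using real_independent(1)[of "1/2 - of_int m" "- of_int n"] by (simp add: algebra_simps)
    then show False
      by (rule not_half_integer)
  qed
  show "w2 / 2 \<notin> \<Lambda>"
  proof
    assume "w2 / 2 \<in> \<Lambda>"
    then obtain m n where "w2 / 2 = of_int m * w1 + of_int n * w2"
      unfolding lattice_def by auto
    then have "1/2 - of_int n = (0::real)"
      using real_independent(2)[of "- of_int m" "1/2 - of_int n"] by (simp add: algebra_simps)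
    then show False
      by (rule not_half_integer)
  qed
qed

lemma lattice_induct [consumes 1, case_names w1 w2 diff]:
  assumes "\<omega> \<in> \<Lambda>" "P w1" "P w2" "\<And>a b. P a \<Longrightarrow> P b \<Longrightarrow> P (a - b)"
  shows "P \<omega>"
proof -
  have zero: "P 0"
    using assms(4)[OF assms(2) assms(2)] by simp
  have add: "P (a + b)" if "P a" "P b" for a b
    using assms(4)[OF that(1) assms(4)[OF zero that(2)]] by simp
  have multiple: "P (of_int m * w)" if "P w" for m w
  proof (induction m rule: int_induct[where k = 0])
    case (step1 i)
    then show ?case
      using add[OF step1(2) that] by (simp add: algebra_simps)
  next
    case (step2 i)
    then show ?case
      using assms(4)[OF step2(2) that] by (simp add: algebra_simps)
  qed (simp add: zero)
  obtain m n where "\<omega> = of_int m * w1 + of_int n * w2"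
    using assms(1) unfolding lattice_def by auto
  then show ?thesis
    using add[OF multiple[OF assms(2)] multiple[OF assms(3)]] by simp
qed

lemma periodic_lattice:
  assumes E: "\<And>z \<omega>. \<omega> \<in> \<Lambda> \<Longrightarrow> z + \<omega> \<in> E \<longleftrightarrow> z \<in> E"
    and per1: "\<And>z. z \<notin> E \<Longrightarrow> f (z + w1) = f z"
    and per2: "\<And>z. z \<notin> E \<Longrightarrow> f (z + w2) = f z"
    and "\<omega> \<in> \<Lambda>" "z \<notin> E"
  shows "f (z + \<omega>) = f z"
proof -
  have "\<omega> \<in> \<Lambda> \<and> (\<forall>z. z \<notin> E \<longrightarrow> f (z + \<omega>) = f z)"
    using \<open>\<omega> \<in> \<Lambda>\<close>
  proof (induction rule: lattice_induct)
    case (diff a b)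
    have "f (z + (a - b)) = f z" if z: "z \<notin> E" for z
    proof -
      have "z - b \<notin> E"
        using E[of b "z - b"] diff z by auto
      then have "f (z - b + a) = f (z - b)" "f (z - b + b) = f (z - b)"
        using diff by blast+
      then show ?thesis
        by (simp add: algebra_simps)
    qed
    then show ?case
      using diff lattice_diff by blast
  qed (use per1 per2 w1_in_lattice w2_in_lattice in auto)
  then show ?thesis
    using \<open>z \<notin> E\<close> by blast
qed

lemma bounded_range_periodic:
  assumes cont: "continuous_on UNIV F"
    and per: "\<And>z \<omega>. \<omega> \<in> \<Lambda> \<Longrightarrow> F (z + \<omega>) = F z"
  shows "bounded (range F)"
proof -
  define cell where
    "cell = (\<lambda>p. of_real (fst p) * w1 + of_real (snd p) * w2) ` ({0..1::real} \<times> {0..1::real})"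
  have "compact cell"
    unfolding cell_def by (intro compact_continuous_image compact_Times compact_Icc) (intro continuous_intros)
  then have "bounded (F ` cell)"
    using cont by (intro compact_imp_bounded compact_continuous_image) (auto intro: continuous_on_subset)
  moreover have "range F \<subseteq> F ` cell"
  proof
    fix y assume "y \<in> range F"
    then obtain z where z: "y = F z"
      by auto
    obtain a b where ab: "z = of_real a * w1 + of_real b * w2"
      using real_coordinates by blast
    define p where "p = (a - of_int \<lfloor>a\<rfloor>, b - of_int \<lfloor>b\<rfloor>)"
    define \<omega> where "\<omega> = of_int \<lfloor>a\<rfloor> * w1 + of_int \<lfloor>b\<rfloor> * w2"
    have "\<omega> \<in> \<Lambda>"
      unfolding \<omega>_def lattice_def by blast
    moreover have "z = (of_real (fst p) * w1 + of_real (snd p) * w2) + \<omega>"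
      unfolding ab p_def \<omega>_def by (simp add: algebra_simps)
    ultimately have "y = F (of_real (fst p) * w1 + of_real (snd p) * w2)"
      using z per by simp
    moreover have "p \<in> {0..1} \<times> {0..1}"
      unfolding p_def by (auto simp: floor_le_iff) linarith+
    ultimately show "y \<in> F ` cell"
      unfolding cell_def by blast
  qed
  ultimately show ?thesis
    using bounded_subset by blast
qed

end

section \<open>The series of \<open>\<wp>\<close> and \<open>\<zeta>\<close>\<close>

lemma summable_on_norm_bound:
  fixes f :: "'a \<Rightarrow> 'b::banach"
  assumes "g summable_on A" "\<And>x. x \<in> A \<Longrightarrow> norm (f x) \<le> g x"
  shows "f summable_on A"
  by (rule Infinite_Sum.abs_summable_summable[OF Infinite_Sum.abs_summable_on_comparison_test'[OF assms]])

definition wp_term :: "complex \<Rightarrow> complex \<Rightarrow> complex" where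
  "wp_term w z = 1 / (z - w)^2 - 1 / w^2"

definition zeta_term :: "complex \<Rightarrow> complex \<Rightarrow> complex" where
  "zeta_term w z = 1 / (z - w) + 1 / w + z / w^2"

definition cube_term :: "complex \<Rightarrow> complex \<Rightarrow> complex" where
  "cube_term w z = 1 / (z - w)^3"

lemma has_field_derivative_wp_term:
  assumes "z \<noteq> w"
  shows "(wp_term w has_field_derivative -2 * cube_term w z) (at z)"
proof -
  have inverse_cube: "- (2 * u * inverse ((u^2) ^ Suc (Suc 0))) - 0 = -2 * (1 / u^3)"
    if "u \<noteq> 0" for u :: complex
    using that by (simp add: field_simps power2_eq_square power3_eq_cube)
  have "((\<lambda>x. (x - w)^2) has_field_derivative 2 * (z - w)) (at z)"
    by (auto intro!: derivative_eq_intros simp: algebra_simps)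
  then have "((\<lambda>x. inverse ((x - w)^2)) has_field_derivative
      - (2 * (z - w) * inverse (((z - w)^2) ^ Suc (Suc 0)))) (at z)"
    using assms by (intro DERIV_inverse_fun) auto
  then have "((\<lambda>x. inverse ((x - w)^2) - 1 / w^2) has_field_derivative
      - (2 * (z - w) * inverse (((z - w)^2) ^ Suc (Suc 0))) - 0) (at z)"
    by (rule DERIV_diff[OF _ DERIV_const])
  moreover have "- (2 * (z - w) * inverse (((z - w)^2) ^ Suc (Suc 0))) - 0 = -2 * cube_term w z"
    unfolding cube_term_def by (rule inverse_cube) (use assms in simp)
  ultimately show ?thesis
    by (simp add: wp_term_def[abs_def] divide_inverse)
qed

lemma has_field_derivative_zeta_term:
  assumes "z \<noteq> w" "w \<noteq> 0"
  shows "(zeta_term w has_field_derivative - wp_term w z) (at z)"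
proof -
  have "((\<lambda>x. x - w) has_field_derivative 1) (at z)"
    by (auto intro!: derivative_eq_intros)
  then have "((\<lambda>x. inverse (x - w)) has_field_derivative - (1 * inverse ((z - w) ^ Suc (Suc 0)))) (at z)"
    using assms by (intro DERIV_inverse_fun) auto
  then have "((\<lambda>x. inverse (x - w) + 1 / w + x * (1 / w^2)) has_field_derivative
      - (1 * inverse ((z - w) ^ Suc (Suc 0))) + 0 + 1 * (1 / w^2)) (at z)"
    by (intro DERIV_add DERIV_const DERIV_cmult_right DERIV_ident)
  moreover have "- (1 * inverse ((z - w) ^ Suc (Suc 0))) + 0 + 1 * (1 / w^2) = - wp_term w z"
    using assms by (simp add: wp_term_def field_simps power2_eq_square)
  ultimately show ?thesis
    by (simp add: zeta_term_def[abs_def] divide_inverse)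
qed

lemma norm_diff_ge_proportional:
  fixes z w :: "'a::real_normed_vector"
  assumes "norm z \<le> R" "r \<le> norm (z - w)" "r > 0"
  shows "min (1/2) (r / (2 * R)) * norm w \<le> norm (z - w)"
proof (cases "norm w \<ge> 2 * R")
  case True
  have "norm w - norm z \<le> norm (z - w)"
    using norm_triangle_ineq2[of w z] by (simp add: norm_minus_commute)
  moreover have "min (1/2) (r / (2 * R)) * norm w \<le> 1/2 * norm w"
    by (intro mult_right_mono) auto
  ultimately show ?thesis
    using True assms(1) by linarith
next
  case False
  then have R: "R > 0"
    using assms(1) by (smt (verit) norm_ge_zero)
  have "min (1/2) (r / (2 * R)) * norm w \<le> r / (2 * R) * norm w"
    by (intro mult_right_mono) auto
  also have "\<dots> \<le> r / (2 * R) * (2 * R)"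
    using False assms(3) R by (intro mult_left_mono) auto
  finally show ?thesis
    using R assms(2) by simp
qed

text \<open>In the bounds below \<open>\<kappa> |w| \<le> |z - w|\<close> keeps \<open>z\<close> away from the pole \<open>w\<close> relative to \<open>|w|\<close>,
  which makes each term \<open>O(|w|\<^sup>-\<^sup>3)\<close> uniformly in \<open>z\<close>.\<close>

lemma norm_wp_term_le:
  assumes k: "\<kappa> > 0" "\<kappa> * cmod w \<le> cmod (z - w)" and w: "c > 0" "c \<le> cmod w" and R: "cmod z \<le> R"
  shows "cmod (wp_term w z) \<le> (R * (2 + R / c) / \<kappa>^2) / cmod w ^ 3"
proof -
  have w0: "w \<noteq> 0"
    using w by auto
  then have "\<kappa> * cmod w > 0"
    using k by simp
  then have zw: "z \<noteq> w"
    using k by auto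
  have R0: "R \<ge> 0"
    using R norm_ge_zero order_trans by blast
  have "wp_term w z = z * (2 * w - z) / ((z - w)^2 * w^2)"
    using zw w0 by (simp add: wp_term_def divide_simps) (simp add: power2_eq_square algebra_simps)
  then have "cmod (wp_term w z) = cmod z * cmod (2 * w - z) / (cmod (z - w)^2 * cmod w^2)"
    by (simp add: norm_mult norm_divide norm_power)
  also have "\<dots> \<le> (R * (R / c * cmod w + 2 * cmod w)) / ((\<kappa> * cmod w)^2 * cmod w^2)"
  proof (rule frac_le)
    have "cmod (2 * w - z) \<le> 2 * cmod w + R"
      using norm_triangle_ineq4[of "2 * w" z] R by (simp add: norm_mult)
    also have "R \<le> R / c * cmod w"
      using w R0 mult_left_mono[of 1 "cmod w / c" R] by (simp add: field_simps)
    finally show "cmod z * cmod (2 * w - z) \<le> R * (R / c * cmod w + 2 * cmod w)"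
      using R R0 by (intro mult_mono) auto
    show "(\<kappa> * cmod w)^2 * cmod w^2 \<le> cmod (z - w)^2 * cmod w^2"
      using k by (intro mult_right_mono power_mono) auto
  qed (use R0 w k w0 in auto)
  also have "\<dots> = (R * (2 + R / c) / \<kappa>^2) / cmod w ^ 3"
    using w0 k by (simp add: field_simps power2_eq_square power3_eq_cube)
  finally show ?thesis .
qed

lemma norm_zeta_term_le:
  assumes k: "\<kappa> > 0" "\<kappa> * cmod w \<le> cmod (z - w)" and w: "w \<noteq> 0" and R: "cmod z \<le> R"
  shows "cmod (zeta_term w z) \<le> (R^2 / \<kappa>) / cmod w ^ 3"
proof -
  have "\<kappa> * cmod w > 0"
    using k w by simp
  then have zw: "z \<noteq> w"
    using k by auto
  have "zeta_term w z = z^2 / ((z - w) * w^2)"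
    using zw w by (simp add: zeta_term_def field_simps power2_eq_square)
  then have "cmod (zeta_term w z) = cmod z ^ 2 / (cmod (z - w) * cmod w^2)"
    by (simp add: norm_mult norm_divide norm_power)
  also have "\<dots> \<le> R^2 / ((\<kappa> * cmod w) * cmod w^2)"
    using k R w by (intro frac_le power_mono mult_right_mono) auto
  also have "\<dots> = (R^2 / \<kappa>) / cmod w ^ 3"
    using w k by (simp add: field_simps power2_eq_square power3_eq_cube)
  finally show ?thesis .
qed

lemma norm_cube_term_le:
  assumes k: "\<kappa> > 0" "\<kappa> * cmod w \<le> cmod (z - w)" and w: "w \<noteq> 0"
  shows "cmod (cube_term w z) \<le> (1 / \<kappa>^3) / cmod w ^ 3"
proof -
  have pos: "\<kappa> * cmod w > 0"
    using k w by simp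
  have "cmod (cube_term w z) = 1 / cmod (z - w)^3"
    by (simp add: cube_term_def norm_divide norm_power)
  also have "\<dots> \<le> 1 / (\<kappa> * cmod w)^3"
    using k pos by (intro divide_left_mono power_mono zero_less_power mult_pos_pos) auto
  also have "\<dots> = (1 / \<kappa>^3) / cmod w ^ 3"
    by (simp add: power_mult_distrib)
  finally show ?thesis .
qed

lemma norm_diff_ge_half:
  fixes z w :: "'a::real_normed_vector"
  assumes "2 * norm z \<le> norm w"
  shows "norm w / 2 \<le> norm (z - w)"
  using norm_triangle_ineq2[of w z] assms by (simp add: norm_minus_commute)

lemma wp_term_taylor_remainder:
  fixes z w :: complex
  assumes w: "w \<noteq> 0" and zw: "2 * cmod z \<le> cmod w"
  shows "cmod (wp_term w z - (2 * z / w^3 + 3 * z^2 / w^4 + 4 * z^3 / w^5 + 5 * z^4 / w^6))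
    \<le> 34 * cmod z ^ 5 * (1 / cmod w ^ 7)"
proof -
  have wpos: "cmod w > 0"
    using w by simp
  have dist: "cmod w / 2 \<le> cmod (z - w)"
    by (rule norm_diff_ge_half[OF zw])
  then have "z \<noteq> w"
    using wpos by auto
  then have eq: "wp_term w z - (2 * z / w^3 + 3 * z^2 / w^4 + 4 * z^3 / w^5 + 5 * z^4 / w^6)
      = z^5 * (6 * w - 5 * z) / (w^6 * (z - w)^2)"
    using w unfolding wp_term_def
    by (simp add: field_simps)
      (simp add: algebra_simps power2_eq_square power3_eq_cube power4_eq_xxxx power_numeral_reduce)
  have "cmod (6 * w - 5 * z) \<le> 17/2 * cmod w"
    using norm_triangle_ineq4[of "6 * w" "5 * z"] zw by (simp add: norm_mult)
  then have "cmod z ^ 5 * cmod (6 * w - 5 * z) / (cmod w ^ 6 * cmod (z - w)^2)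
      \<le> cmod z ^ 5 * (17/2 * cmod w) / (cmod w ^ 6 * (cmod w / 2)^2)"
    using wpos dist by (intro frac_le mult_left_mono mult_pos_pos power_mono) auto
  then have "cmod (wp_term w z - (2 * z / w^3 + 3 * z^2 / w^4 + 4 * z^3 / w^5 + 5 * z^4 / w^6))
      \<le> cmod z ^ 5 * (17/2 * cmod w) / (cmod w ^ 6 * (cmod w / 2)^2)"
    by (simp add: eq norm_mult norm_divide norm_power)
  also have "\<dots> = 34 * cmod z ^ 5 * (1 / cmod w ^ 7)"
    using wpos by (simp add: field_simps eval_nat_numeral)
  finally show ?thesis .
qed

lemma cube_term_taylor_remainder:
  fixes z w :: complex
  assumes w: "w \<noteq> 0" and zw: "2 * cmod z \<le> cmod w"
  shows "cmod (cube_term w z + (1 / w^3 + 3 * z / w^4 + 6 * z^2 / w^5 + 10 * z^3 / w^6))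
    \<le> 240 * cmod z ^ 4 * (1 / cmod w ^ 7)"
proof -
  have wpos: "cmod w > 0"
    using w by simp
  have dist: "cmod w / 2 \<le> cmod (z - w)"
    by (rule norm_diff_ge_half[OF zw])
  then have "z \<noteq> w"
    using wpos by auto
  then have eq: "cube_term w z + (1 / w^3 + 3 * z / w^4 + 6 * z^2 / w^5 + 10 * z^3 / w^6)
      = z^4 * (15 * w^2 - 24 * w * z + 10 * z^2) / (w^6 * (z - w)^3)"
    using w unfolding cube_term_def
    by (simp add: field_simps)
      (simp add: algebra_simps power2_eq_square power3_eq_cube power4_eq_xxxx power_numeral_reduce)
  have "cmod (15 * w^2 - 24 * w * z + 10 * z^2) \<le> cmod (15 * w^2) + cmod (24 * w * z) + cmod (10 * z^2)"
    by (rule order_trans[OF norm_triangle_ineq] order_trans[OF norm_triangle_ineq4] add_mono order_refl)+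
  also have "\<dots> = 15 * cmod w ^ 2 + 24 * cmod w * cmod z + 10 * cmod z ^ 2"
    by (simp add: norm_mult norm_power)
  also have "\<dots> \<le> 15 * cmod w ^ 2 + 24 * cmod w * (cmod w / 2) + 10 * (cmod w / 2) ^ 2"
    using zw by (intro add_mono mult_left_mono power_mono order_refl) auto
  also have "\<dots> = 59/2 * cmod w ^ 2"
    by (simp add: power2_eq_square field_simps)
  finally have "cmod z ^ 4 * cmod (15 * w^2 - 24 * w * z + 10 * z^2) / (cmod w ^ 6 * cmod (z - w)^3)
      \<le> cmod z ^ 4 * (59/2 * cmod w ^ 2) / (cmod w ^ 6 * (cmod w / 2)^3)"
    using wpos dist by (intro frac_le mult_left_mono mult_pos_pos power_mono) auto
  then have "cmod (cube_term w z + (1 / w^3 + 3 * z / w^4 + 6 * z^2 / w^5 + 10 * z^3 / w^6))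
      \<le> cmod z ^ 4 * (59/2 * cmod w ^ 2) / (cmod w ^ 6 * (cmod w / 2)^3)"
    by (simp add: eq norm_mult norm_divide norm_power)
  also have "\<dots> \<le> 240 * cmod z ^ 4 * (1 / cmod w ^ 7)"
    using wpos by (simp add: field_simps eval_nat_numeral)
  finally show ?thesis .
qed

text \<open>The Laurent expansions \<open>\<wp> = z\<^sup>-\<^sup>2 + z\<^sup>2 H\<close> and \<open>\<wp>' = -2 z\<^sup>-\<^sup>3 + z H'\<close>: all negative powers
  cancel in \<open>\<wp>'\<^sup>2 - r(\<wp>)\<close>, which is therefore \<open>z\<close> times a polynomial in \<open>z, p, q\<close>.\<close>

lemma laurent_ode_identity:
  fixes z a b p q H H' :: complex
  assumes "z \<noteq> 0" "H = a + b * z^2 + p * z^3" "H' = 2 * a + 4 * b * z^2 + q * z^3"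
  shows "(-2 / z^3 + z * H')^2 - (4 * (1 / z^2 + z^2 * H)^3 - 20 * a * (1 / z^2 + z^2 * H) - 28 * b)
    = z * (- 4 * q - 12 * p + z * (H'^2 - 12 * H^2 - 4 * z^4 * H^3 + 20 * a * H))"
proof -
  define y where "y = 1 / z"
  have "z * y = 1"
    using assms(1) by (simp add: y_def)
  moreover have "-2 / z^3 = -2 * y^3" "1 / z^2 = y^2"
    by (simp_all add: y_def power_one_over)
  ultimately show ?thesis
    unfolding assms(2,3) by simp algebra
qed

context period_lattice
begin

abbreviation wp_lattice :: "complex \<Rightarrow> complex" ("\<wp>") where
  "\<wp> \<equiv> wp w1 w2"

abbreviation \<zeta> :: "complex \<Rightarrow> complex" where
  "\<zeta> \<equiv> wzeta w1 w2"

definition wp_tail :: "complex \<Rightarrow> complex" where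
  "wp_tail z = (\<Sum>\<^sub>\<infinity>w\<in>\<Lambda> - {0}. wp_term w z)"

definition zeta_tail :: "complex \<Rightarrow> complex" where
  "zeta_tail z = (\<Sum>\<^sub>\<infinity>w\<in>\<Lambda> - {0}. zeta_term w z)"

definition cube_tail :: "complex \<Rightarrow> complex" where
  "cube_tail z = (\<Sum>\<^sub>\<infinity>w\<in>\<Lambda> - {0}. cube_term w z)"

lemma wp_eq_tail: "\<wp> z = 1 / z^2 + wp_tail z"
  by (simp add: wp_def wp_tail_def wp_term_def)

lemma wzeta_eq_tail: "\<zeta> z = 1 / z + zeta_tail z"
  by (simp add: wzeta_def zeta_tail_def zeta_term_def)

lemma terms_locally_bounded:
  assumes "z0 \<notin> \<Lambda> - {0}"
  obtains r K where "r > 0" "\<And>z. z \<in> cball z0 r \<Longrightarrow> z \<notin> \<Lambda> - {0}"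
    "\<And>z w. z \<in> cball z0 r \<Longrightarrow> w \<in> \<Lambda> - {0} \<Longrightarrow>
       cmod (wp_term w z) \<le> K / cmod w ^ 3 \<and> cmod (zeta_term w z) \<le> K / cmod w ^ 3 \<and>
       cmod (cube_term w z) \<le> K / cmod w ^ 3"
proof -
  obtain e where e: "e > 0" "ball z0 e \<subseteq> - (\<Lambda> - {0})"
    using open_Compl_lattice_nonzero assms by (meson ComplI open_contains_ball)
  define r where "r = e / 2"
  define R where "R = cmod z0 + r"
  define \<kappa> where "\<kappa> = min (1/2) (r / (2 * R))"
  define K where "K = R * (2 + R / \<delta>) / \<kappa>^2 + R^2 / \<kappa> + 1 / \<kappa>^3"
  have r: "r > 0" and R: "R > 0" and \<kappa>: "\<kappa> > 0"
    using e by (simp_all add: r_def R_def \<kappa>_def add_nonneg_pos)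
  have K: "R * (2 + R / \<delta>) / \<kappa>^2 \<le> K" "R^2 / \<kappa> \<le> K" "1 / \<kappa>^3 \<le> K"
    using R \<kappa> delta_pos by (auto simp: K_def)
  have inside: "z \<in> ball z0 e" if "z \<in> cball z0 r" for z
    using that e by (auto simp: r_def)
  have "cmod (wp_term w z) \<le> K / cmod w ^ 3 \<and> cmod (zeta_term w z) \<le> K / cmod w ^ 3 \<and>
      cmod (cube_term w z) \<le> K / cmod w ^ 3"
    if z: "z \<in> cball z0 r" and w: "w \<in> \<Lambda> - {0}" for z w
  proof -
    have w0: "w \<noteq> 0" and w_ge: "\<delta> \<le> cmod w"
      using w lattice_norm_ge by auto
    have zR: "cmod z \<le> R"
      using z norm_triangle_ineq2[of z z0] by (auto simp: R_def dist_norm norm_minus_commute)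
    have "e \<le> dist z0 w"
      using e w by (auto simp: subset_eq)
    then have "r \<le> cmod (z - w)"
      using z dist_triangle[of z0 w z] by (simp add: dist_norm r_def)
    then have near: "\<kappa> * cmod w \<le> cmod (z - w)"
      unfolding \<kappa>_def by (rule norm_diff_ge_proportional[OF zR _ r])
    have weaken: "X \<le> K / cmod w ^ 3" if "X \<le> A / cmod w ^ 3" "A \<le> K" for X A
      using order_trans[OF that(1) divide_right_mono[OF that(2)]] by simp
    show ?thesis
      using weaken[OF norm_wp_term_le[OF \<kappa> near delta_pos w_ge zR] K(1)]
        weaken[OF norm_zeta_term_le[OF \<kappa> near w0 zR] K(2)]
        weaken[OF norm_cube_term_le[OF \<kappa> near w0] K(3)]
      by blast
  qed
  then show ?thesis
    using that r inside e by blast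
qed

lemma terms_summable:
  assumes "z \<notin> \<Lambda> - {0}"
  shows "(\<lambda>w. wp_term w z) summable_on \<Lambda> - {0}" "(\<lambda>w. zeta_term w z) summable_on \<Lambda> - {0}"
    "(\<lambda>w. cube_term w z) summable_on \<Lambda> - {0}"
proof -
  obtain r K where r: "r > 0" and bounds: "\<And>z' w. z' \<in> cball z r \<Longrightarrow> w \<in> \<Lambda> - {0} \<Longrightarrow>
       cmod (wp_term w z') \<le> K / cmod w ^ 3 \<and> cmod (zeta_term w z') \<le> K / cmod w ^ 3 \<and>
       cmod (cube_term w z') \<le> K / cmod w ^ 3"
    using terms_locally_bounded[OF assms] by metis
  have "z \<in> cball z r"
    using r by simp
  note bound = bounds[OF this]
  have majorant: "(\<lambda>w. K / cmod w ^ 3) summable_on \<Lambda> - {0}"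
    using summable_on_cmult_right[OF lattice_inverse_power_summable[of 3], of K] by simp
  show "(\<lambda>w. wp_term w z) summable_on \<Lambda> - {0}"
    using bound by (intro summable_on_norm_bound[OF majorant]) blast
  show "(\<lambda>w. zeta_term w z) summable_on \<Lambda> - {0}"
    using bound by (intro summable_on_norm_bound[OF majorant]) blast
  show "(\<lambda>w. cube_term w z) summable_on \<Lambda> - {0}"
    using bound by (intro summable_on_norm_bound[OF majorant]) blast
qed

lemma has_field_derivative_wp_tail:
  assumes "z0 \<notin> \<Lambda> - {0}"
  shows "(wp_tail has_field_derivative -2 * cube_tail z0) (at z0)"
proof -
  obtain r K where r: "r > 0" "\<And>z. z \<in> cball z0 r \<Longrightarrow> z \<notin> \<Lambda> - {0}"
    and bounds: "\<And>z w. z \<in> cball z0 r \<Longrightarrow> w \<in> \<Lambda> - {0} \<Longrightarrow>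
       cmod (wp_term w z) \<le> K / cmod w ^ 3 \<and> cmod (zeta_term w z) \<le> K / cmod w ^ 3 \<and>
       cmod (cube_term w z) \<le> K / cmod w ^ 3"
    using terms_locally_bounded[OF assms] by metis
  have "(wp_tail has_field_derivative (\<Sum>\<^sub>\<infinity>w\<in>\<Lambda> - {0}. -2 * cube_term w z0)) (at z0)"
    unfolding wp_tail_def[abs_def]
  proof (rule infsum_has_field_derivative[OF r(1)])
    show "(\<lambda>w. K / cmod w ^ 3) summable_on \<Lambda> - {0}"
      using summable_on_cmult_right[OF lattice_inverse_power_summable[of 3], of K] by simp
  next
    fix w z assume "w \<in> \<Lambda> - {0}" "z \<in> cball z0 r"
    then show "(wp_term w has_field_derivative -2 * cube_term w z) (at z)"
      using r(2) by (intro has_field_derivative_wp_term) auto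
  next
    fix w z assume "w \<in> \<Lambda> - {0}" "z \<in> cball z0 r"
    then show "norm (wp_term w z) \<le> K / cmod w ^ 3"
      using bounds by blast
  qed
  then show ?thesis
    unfolding cube_tail_def infsum_cmult_right[OF terms_summable(3)[OF assms]] .
qed

lemma has_field_derivative_zeta_tail:
  assumes "z0 \<notin> \<Lambda> - {0}"
  shows "(zeta_tail has_field_derivative - wp_tail z0) (at z0)"
proof -
  obtain r K where r: "r > 0" "\<And>z. z \<in> cball z0 r \<Longrightarrow> z \<notin> \<Lambda> - {0}"
    and bounds: "\<And>z w. z \<in> cball z0 r \<Longrightarrow> w \<in> \<Lambda> - {0} \<Longrightarrow>
       cmod (wp_term w z) \<le> K / cmod w ^ 3 \<and> cmod (zeta_term w z) \<le> K / cmod w ^ 3 \<and>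
       cmod (cube_term w z) \<le> K / cmod w ^ 3"
    using terms_locally_bounded[OF assms] by metis
  have "(zeta_tail has_field_derivative (\<Sum>\<^sub>\<infinity>w\<in>\<Lambda> - {0}. - wp_term w z0)) (at z0)"
    unfolding zeta_tail_def[abs_def]
  proof (rule infsum_has_field_derivative[OF r(1)])
    show "(\<lambda>w. K / cmod w ^ 3) summable_on \<Lambda> - {0}"
      using summable_on_cmult_right[OF lattice_inverse_power_summable[of 3], of K] by simp
  next
    fix w z assume "w \<in> \<Lambda> - {0}" "z \<in> cball z0 r"
    then show "(zeta_term w has_field_derivative - wp_term w z) (at z)"
      using r(2) by (intro has_field_derivative_zeta_term) auto
  next
    fix w z assume "w \<in> \<Lambda> - {0}" "z \<in> cball z0 r"
    then show "norm (zeta_term w z) \<le> K / cmod w ^ 3"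
      using bounds by blast
  qed
  then show ?thesis
    unfolding wp_tail_def infsum_uminus .
qed

lemma holomorphic_wp_tail: "wp_tail holomorphic_on - (\<Lambda> - {0})"
  using has_field_derivative_wp_tail open_Compl_lattice_nonzero
  by (auto simp: holomorphic_on_open field_differentiable_def)

lemma holomorphic_zeta_tail: "zeta_tail holomorphic_on - (\<Lambda> - {0})"
  using has_field_derivative_zeta_tail open_Compl_lattice_nonzero
  by (auto simp: holomorphic_on_open field_differentiable_def)

lemma has_field_derivative_wzeta:
  assumes "z \<notin> \<Lambda>"
  shows "(\<zeta> has_field_derivative - \<wp> z) (at z)"
proof -
  have "z \<noteq> 0"
    using assms zero_in_lattice by auto
  then have "((\<lambda>z. 1 / z + zeta_tail z) has_field_derivative - \<wp> z) (at z)"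
    using assms has_field_derivative_zeta_tail[of z]
    by (auto intro!: derivative_eq_intros simp: wp_eq_tail field_simps power2_eq_square)
  then show ?thesis
    by (simp add: wzeta_eq_tail[abs_def])
qed

lemma holomorphic_wzeta: "\<zeta> holomorphic_on - \<Lambda>"
  using has_field_derivative_wzeta open_Compl_lattice
  by (auto simp: holomorphic_on_open field_differentiable_def)

definition cube_sum :: "complex \<Rightarrow> complex" where
  "cube_sum z = (\<Sum>\<^sub>\<infinity>w\<in>\<Lambda>. cube_term w z)"

lemma cube_sum_eq_tail:
  assumes "z \<notin> \<Lambda>"
  shows "cube_sum z = 1 / z^3 + cube_tail z"
proof -
  have "\<Lambda> = insert 0 (\<Lambda> - {0})"
    using zero_in_lattice by auto
  then have "cube_sum z = (\<Sum>\<^sub>\<infinity>w\<in>insert 0 (\<Lambda> - {0}). cube_term w z)"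
    unfolding cube_sum_def by simp
  also have "\<dots> = cube_term 0 z + cube_tail z"
    unfolding cube_tail_def using assms by (intro infsum_insert terms_summable(3)) auto
  finally show ?thesis
    by (simp add: cube_term_def)
qed

lemma has_field_derivative_wp:
  assumes "z \<notin> \<Lambda>"
  shows "(\<wp> has_field_derivative -2 * cube_sum z) (at z)"
proof -
  have "z \<noteq> 0"
    using assms zero_in_lattice by auto
  then have "((\<lambda>z. 1 / z^2 + wp_tail z) has_field_derivative -2 / z^3 - 2 * cube_tail z) (at z)"
    using assms has_field_derivative_wp_tail[of z]
    by (auto intro!: derivative_eq_intros simp: field_simps power2_eq_square power3_eq_cube)
  moreover have "-2 / z^3 - 2 * cube_tail z = -2 * cube_sum z"
    using assms by (simp add: cube_sum_eq_tail algebra_simps)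
  ultimately show ?thesis
    unfolding wp_eq_tail[abs_def] by simp
qed

lemma deriv_wp: "z \<notin> \<Lambda> \<Longrightarrow> deriv \<wp> z = -2 * cube_sum z"
  using has_field_derivative_wp by (rule DERIV_imp_deriv)

lemma holomorphic_wp: "\<wp> holomorphic_on - \<Lambda>"
  using has_field_derivative_wp open_Compl_lattice
  by (auto simp: holomorphic_on_open field_differentiable_def)

lemma holomorphic_deriv_wp: "deriv \<wp> holomorphic_on - \<Lambda>"
  by (rule holomorphic_deriv[OF holomorphic_wp open_Compl_lattice])

lemma bij_betw_uminus_lattice: "bij_betw uminus \<Lambda> \<Lambda>"
  by (rule bij_betwI[of _ _ _ uminus]) (auto simp: uminus_in_lattice_iff)

lemma bij_betw_uminus_lattice_nonzero: "bij_betw uminus (\<Lambda> - {0}) (\<Lambda> - {0})"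
  by (rule bij_betwI[of _ _ _ uminus]) (auto simp: uminus_in_lattice_iff)

lemma wp_even: "\<wp> (- z) = \<wp> z"
proof -
  have "wp_term w (- z) = wp_term (- w) z" for w
    by (simp add: wp_term_def power2_eq_square algebra_simps)
  then have "wp_tail (- z) = (\<Sum>\<^sub>\<infinity>w\<in>\<Lambda> - {0}. wp_term (- w) z)"
    by (simp add: wp_tail_def)
  also have "\<dots> = wp_tail z"
    unfolding wp_tail_def by (rule infsum_reindex_bij_betw[OF bij_betw_uminus_lattice_nonzero])
  finally show ?thesis
    by (simp add: wp_eq_tail)
qed

lemma wzeta_odd: "\<zeta> (- z) = - \<zeta> z"
proof -
  have "zeta_term w (- z) = - zeta_term (- w) z" for w
  proof -
    have "1 / (- z - w) = - (1 / (z - - w))"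
      by (metis minus_diff_eq minus_divide_right diff_minus_eq_add add.commute)
    then show ?thesis
      by (simp add: zeta_term_def)
  qed
  then have "zeta_tail (- z) = - (\<Sum>\<^sub>\<infinity>w\<in>\<Lambda> - {0}. zeta_term (- w) z)"
    by (simp add: zeta_tail_def infsum_uminus)
  also have "(\<Sum>\<^sub>\<infinity>w\<in>\<Lambda> - {0}. zeta_term (- w) z) = zeta_tail z"
    unfolding zeta_tail_def by (rule infsum_reindex_bij_betw[OF bij_betw_uminus_lattice_nonzero])
  finally show ?thesis
    by (simp add: wzeta_eq_tail)
qed

lemma cube_sum_odd: "cube_sum (- z) = - cube_sum z"
proof -
  have "cube_term w (- z) = - cube_term (- w) z" for w
  proof -
    have "(- z - w)^3 = - ((z - - w)^3)"
      by (simp add: power3_eq_cube algebra_simps)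
    then show ?thesis
      by (simp add: cube_term_def)
  qed
  then have "cube_sum (- z) = - (\<Sum>\<^sub>\<infinity>w\<in>\<Lambda>. cube_term (- w) z)"
    by (simp add: cube_sum_def infsum_uminus)
  also have "(\<Sum>\<^sub>\<infinity>w\<in>\<Lambda>. cube_term (- w) z) = cube_sum z"
    unfolding cube_sum_def by (rule infsum_reindex_bij_betw[OF bij_betw_uminus_lattice])
  finally show ?thesis .
qed

lemma cube_sum_periodic:
  assumes "\<omega> \<in> \<Lambda>"
  shows "cube_sum (z + \<omega>) = cube_sum z"
proof -
  have "bij_betw (\<lambda>w. w + \<omega>) \<Lambda> \<Lambda>"
    using assms by (intro bij_betwI[of _ _ _ "\<lambda>w. w - \<omega>"]) (auto simp: lattice_add lattice_diff)
  then have "(\<Sum>\<^sub>\<infinity>w\<in>\<Lambda>. 1 / (z + \<omega> - (w + \<omega>))^3) = (\<Sum>\<^sub>\<infinity>w\<in>\<Lambda>. 1 / (z + \<omega> - w)^3)"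
    by (rule infsum_reindex_bij_betw)
  then show ?thesis
    by (simp add: cube_sum_def cube_term_def)
qed

lemma deriv_wp_odd: "z \<notin> \<Lambda> \<Longrightarrow> deriv \<wp> (- z) = - deriv \<wp> z"
  using deriv_wp[of z] deriv_wp[of "- z"] cube_sum_odd[of z] uminus_in_lattice_iff[of z] by simp

lemma deriv_wp_periodic: "\<omega> \<in> \<Lambda> \<Longrightarrow> z \<notin> \<Lambda> \<Longrightarrow> deriv \<wp> (z + \<omega>) = deriv \<wp> z"
  using deriv_wp[of z] deriv_wp[of "z + \<omega>"] cube_sum_periodic[of \<omega> z] add_in_lattice_iff[of \<omega> z] by simp

lemma shift_difference_constant:
  assumes der: "\<And>z. z \<notin> \<Lambda> \<Longrightarrow> (f has_field_derivative f' z) (at z)"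
    and per: "\<And>z. z \<notin> \<Lambda> \<Longrightarrow> f' (z + \<omega>) = f' z"
    and \<omega>: "\<omega> \<in> \<Lambda>"
  obtains c where "\<And>z. z \<notin> \<Lambda> \<Longrightarrow> f (z + \<omega>) = f z + c"
proof -
  have der_diff: "\<forall>z\<in>- \<Lambda> - {}. ((\<lambda>z. f (z + \<omega>) - f z) has_field_derivative 0) (at z)"
  proof
    fix z assume "z \<in> - \<Lambda> - {}"
    then have "z \<notin> \<Lambda>" "z + \<omega> \<notin> \<Lambda>"
      using add_in_lattice_iff[OF \<omega>] by auto
    then have "((\<lambda>z. f (z + \<omega>) - f z) has_field_derivative f' (z + \<omega>) - f' z) (at z)"
      using DERIV_shift[of f "f' (z + \<omega>)" z \<omega>] der by (intro DERIV_diff) auto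
    then show "((\<lambda>z. f (z + \<omega>) - f z) has_field_derivative 0) (at z)"
      using per \<open>z \<notin> \<Lambda>\<close> by simp
  qed
  then have "continuous_on (- \<Lambda>) (\<lambda>z. f (z + \<omega>) - f z)"
    by (auto intro!: continuous_at_imp_continuous_on DERIV_isCont)
  from DERIV_zero_connected_constant[OF connected_Compl_lattice open_Compl_lattice finite.emptyI this der_diff]
  obtain c where "\<And>z. z \<in> - \<Lambda> \<Longrightarrow> f (z + \<omega>) - f z = c"
    by blast
  then show ?thesis
    using that[of c] by (simp add: algebra_simps)
qed

lemma wp_periodic:
  assumes "\<omega> \<in> \<Lambda>" "z \<notin> \<Lambda>"
  shows "\<wp> (z + \<omega>) = \<wp> z"
proof -
  have generator: "\<wp> (z + w) = \<wp> z" if "z \<notin> \<Lambda>" and w: "w \<in> {w1, w2}" for z w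
  proof -
    have "w \<in> \<Lambda>"
      using w w1_in_lattice w2_in_lattice by auto
    obtain c where c: "\<And>z. z \<notin> \<Lambda> \<Longrightarrow> \<wp> (z + w) = \<wp> z + c"
      by (rule shift_difference_constant[of \<wp> "\<lambda>z. -2 * cube_sum z" w])
        (use has_field_derivative_wp cube_sum_periodic \<open>w \<in> \<Lambda>\<close> in auto)
    text \<open>At the half period \<open>-w/2\<close> the shift by \<open>w\<close> is a reflection, so \<open>c = 0\<close>.\<close>
    have "- w / 2 \<notin> \<Lambda>"
      using w half_period_notin_lattice uminus_in_lattice_iff[of "w / 2"] by auto
    then have "\<wp> (- (- w / 2)) = \<wp> (- w / 2) + c"
      using c[of "- w / 2"] by simp
    then have "c = 0"
      by (simp add: wp_even)
    then show "\<wp> (z + w) = \<wp> z"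
      using c \<open>z \<notin> \<Lambda>\<close> by simp
  qed
  show ?thesis
    by (rule periodic_lattice[OF _ generator generator assms]) (auto simp: add_in_lattice_iff)
qed

lemma double_notin_lattice:
  assumes "z \<notin> \<Lambda>" "deriv \<wp> z \<noteq> 0"
  shows "2 * z \<notin> \<Lambda>"
proof
  assume "2 * z \<in> \<Lambda>"
  then have "deriv \<wp> (- z + 2 * z) = deriv \<wp> (- z)"
    using assms(1) uminus_in_lattice_iff by (intro deriv_wp_periodic) auto
  then have "deriv \<wp> z = - deriv \<wp> z"
    using deriv_wp_odd[OF assms(1)] by simp
  then show False
    using assms(2) by simp
qed

lemma wzeta_quasi_periodic:
  assumes "\<omega> \<in> \<Lambda>"
  obtains \<eta> where "\<And>z. z \<notin> \<Lambda> \<Longrightarrow> \<zeta> (z + \<omega>) = \<zeta> z + \<eta>"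
  by (rule shift_difference_constant[of \<zeta> "\<lambda>z. - \<wp> z" \<omega>])
    (use has_field_derivative_wzeta wp_periodic assms that in auto)

text \<open>Liouville's theorem, applied to the extension across the removable singularities.\<close>

lemma elliptic_function_constant:
  assumes fin: "\<And>z. finite (E \<inter> cball z 1)"
    and E_periodic: "\<And>z \<omega>. \<omega> \<in> \<Lambda> \<Longrightarrow> z + \<omega> \<in> E \<longleftrightarrow> z \<in> E"
    and hol: "f holomorphic_on - E"
    and per1: "\<And>z. z \<notin> E \<Longrightarrow> f (z + w1) = f z"
    and per2: "\<And>z. z \<notin> E \<Longrightarrow> f (z + w2) = f z"
    and lim: "\<And>e. e \<in> E \<Longrightarrow> \<exists>l. (f \<longlongrightarrow> l) (at e)"
  obtains c where "\<And>z. z \<notin> E \<Longrightarrow> f z = c"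
proof -
  define F where "F z = (if z \<in> E then Lim (at z) f else f z)" for z
  have F_lim: "(f \<longlongrightarrow> F e) (at e)" if "e \<in> E" for e
  proof -
    from lim[OF that] obtain l where l: "(f \<longlongrightarrow> l) (at e)"
      by blast
    then have "Lim (at e) f = l"
      by (rule tendsto_Lim[rotated]) simp
    then show ?thesis
      using l that by (simp add: F_def)
  qed
  have F_ext: "F z = f z" if "z \<notin> E" for z
    using that by (simp add: F_def)
  have F_hol: "F holomorphic_on UNIV"
    by (rule holomorphic_extension_locally_finite[OF fin hol F_lim F_ext])
  have F_per: "F (z + w) = F z" if "w \<in> {w1, w2}" for z w
  proof (cases "z \<in> E")
    case False
    then show ?thesis
      using that E_periodic[of w z] w1_in_lattice w2_in_lattice per1 per2 F_ext by auto
  next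
    case True
    have "z + w \<in> E"
      using True that E_periodic[of w z] w1_in_lattice w2_in_lattice by auto
    moreover have "(f \<longlongrightarrow> F z) (at (z + w))"
      using that w1_in_lattice w2_in_lattice per1 per2 E_periodic[of w]
      by (intro tendsto_shift_periodic[OF fin _ _ F_lim[OF True]]) auto
    ultimately show ?thesis
      using F_lim tendsto_unique by (metis trivial_limit_at)
  qed
  have "F (z + \<omega>) = F z" if "\<omega> \<in> \<Lambda>" for z \<omega>
    using periodic_lattice[of "{}" F, OF _ _ _ that] F_per by auto
  then have "bounded (range F)"
    using F_hol by (intro bounded_range_periodic holomorphic_on_imp_continuous_on)
  from Liouville_theorem[OF F_hol this] obtain c where "\<And>z. F z = c"
    by (auto simp: constant_on_def)
  then show ?thesis
    using that F_ext by metis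
qed

section \<open>The differential equation of \<open>\<wp>\<close>\<close>

definition G4 :: complex where
  "G4 = (\<Sum>\<^sub>\<infinity>w\<in>\<Lambda> - {0}. 1 / w^4)"

definition G6 :: complex where
  "G6 = (\<Sum>\<^sub>\<infinity>w\<in>\<Lambda> - {0}. 1 / w^6)"

definition inverse_norm7_sum :: real where
  "inverse_norm7_sum = (\<Sum>\<^sub>\<infinity>w\<in>\<Lambda> - {0}. 1 / cmod w ^ 7)"

lemma g2_eq: "g2 w1 w2 = 60 * G4" and g3_eq: "g3 w1 w2 = 140 * G6"
  by (simp_all add: g2_def g3_def G4_def G6_def)

lemma inverse_power_summable: "n \<ge> 3 \<Longrightarrow> (\<lambda>w. 1 / w^n) summable_on \<Lambda> - {0}"
  by (rule summable_on_norm_bound[OF lattice_inverse_power_summable]) (auto simp: norm_divide norm_power)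

lemma infsum_inverse_odd_power:
  assumes "odd n"
  shows "(\<Sum>\<^sub>\<infinity>w\<in>\<Lambda> - {0}. 1 / w^n) = 0"
proof -
  have "(\<Sum>\<^sub>\<infinity>w\<in>\<Lambda> - {0}. 1 / w^n) = (\<Sum>\<^sub>\<infinity>w\<in>\<Lambda> - {0}. 1 / (- w)^n)"
    by (rule infsum_reindex_bij_betw[OF bij_betw_uminus_lattice_nonzero, symmetric])
  also have "\<dots> = - (\<Sum>\<^sub>\<infinity>w\<in>\<Lambda> - {0}. 1 / w^n)"
    using assms by (simp add: power_minus_odd infsum_uminus)
  finally show ?thesis
    by simp
qed

lemma infsum_inverse_powers_3_to_6:
  "(\<Sum>\<^sub>\<infinity>w\<in>\<Lambda> - {0}. a * (1 / w^3) + b * (1 / w^4) + c * (1 / w^5) + d * (1 / w^6)) = b * G4 + d * G6"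
  and summable_inverse_powers_3_to_6:
  "(\<lambda>w. a * (1 / w^3) + b * (1 / w^4) + c * (1 / w^5) + d * (1 / w^6)) summable_on \<Lambda> - {0}"
proof -
  have s: "(\<lambda>w. 1 / w^n) summable_on \<Lambda> - {0}" if "n \<in> {3, 4, 5, 6}" for n
    using that by (intro inverse_power_summable) auto
  show "(\<lambda>w. a * (1 / w^3) + b * (1 / w^4) + c * (1 / w^5) + d * (1 / w^6)) summable_on \<Lambda> - {0}"
    by (intro summable_on_add summable_on_cmult_right s) auto
  then show "(\<Sum>\<^sub>\<infinity>w\<in>\<Lambda> - {0}. a * (1 / w^3) + b * (1 / w^4) + c * (1 / w^5) + d * (1 / w^6))
      = b * G4 + d * G6"
    using infsum_inverse_odd_power[of 3] infsum_inverse_odd_power[of 5]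
    by (subst infsum_add infsum_cmult_right, (intro summable_on_add summable_on_cmult_right s; simp)+)+
      (simp add: G4_def G6_def)
qed

lemma small_notin_lattice:
  assumes "z \<noteq> 0" "cmod z \<le> \<delta> / 2"
  shows "z \<notin> \<Lambda>" "\<And>w. w \<in> \<Lambda> - {0} \<Longrightarrow> 2 * cmod z \<le> cmod w"
proof -
  show w: "2 * cmod z \<le> cmod w" if "w \<in> \<Lambda> - {0}" for w
    using lattice_norm_ge[of w] that assms by auto
  show "z \<notin> \<Lambda>"
    using w[of z] assms by auto
qed

lemma norm_infsum_le_inverse_norm7:
  assumes "f summable_on \<Lambda> - {0}" "\<And>w. w \<in> \<Lambda> - {0} \<Longrightarrow> cmod (f w) \<le> C * (1 / cmod w ^ 7)"
  shows "cmod (infsum f (\<Lambda> - {0})) \<le> C * inverse_norm7_sum"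
proof -
  have majorant: "(\<lambda>w. C * (1 / cmod w ^ 7)) summable_on \<Lambda> - {0}"
    by (intro summable_on_cmult_right lattice_inverse_power_summable) simp
  then have norm_summable: "(\<lambda>w. norm (f w)) summable_on \<Lambda> - {0}"
    using assms(2) by (rule Infinite_Sum.abs_summable_on_comparison_test')
  have "cmod (infsum f (\<Lambda> - {0})) \<le> infsum (\<lambda>w. norm (f w)) (\<Lambda> - {0})"
    by (rule norm_infsum_bound[OF norm_summable])
  also have "\<dots> \<le> infsum (\<lambda>w. C * (1 / cmod w ^ 7)) (\<Lambda> - {0})"
    by (rule infsum_mono[OF norm_summable majorant assms(2)])
  also have "\<dots> = C * inverse_norm7_sum"
    unfolding inverse_norm7_sum_def
    by (intro infsum_cmult_right lattice_inverse_power_summable) simp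
  finally show ?thesis .
qed

lemma wp_tail_expansion:
  assumes z: "z \<noteq> 0" "cmod z \<le> \<delta> / 2"
  shows "cmod (wp_tail z - 3 * G4 * z^2 - 5 * G6 * z^4) \<le> 34 * cmod z ^ 5 * inverse_norm7_sum"
proof -
  note small = small_notin_lattice[OF z]
  define T where "T w = (-2 * z) * (1 / w^3) + (-3 * z^2) * (1 / w^4) + (-4 * z^3) * (1 / w^5)
    + (-5 * z^4) * (1 / w^6)" for w
  have terms: "(\<lambda>w. wp_term w z) summable_on \<Lambda> - {0}"
    using small by (intro terms_summable) auto
  have "wp_tail z - 3 * G4 * z^2 - 5 * G6 * z^4 = wp_tail z + infsum T (\<Lambda> - {0})"
    unfolding T_def infsum_inverse_powers_3_to_6 by simp
  also have "\<dots> = (\<Sum>\<^sub>\<infinity>w\<in>\<Lambda> - {0}. wp_term w z + T w)"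
    unfolding wp_tail_def T_def by (rule infsum_add[OF terms summable_inverse_powers_3_to_6, symmetric])
  finally have eq: "wp_tail z - 3 * G4 * z^2 - 5 * G6 * z^4 = (\<Sum>\<^sub>\<infinity>w\<in>\<Lambda> - {0}. wp_term w z + T w)" .
  have "cmod (\<Sum>\<^sub>\<infinity>w\<in>\<Lambda> - {0}. wp_term w z + T w) \<le> (34 * cmod z ^ 5) * inverse_norm7_sum"
  proof (rule norm_infsum_le_inverse_norm7)
    show "(\<lambda>w. wp_term w z + T w) summable_on \<Lambda> - {0}"
      unfolding T_def by (intro summable_on_add terms summable_inverse_powers_3_to_6)
    fix w assume w: "w \<in> \<Lambda> - {0}"
    have "wp_term w z + T w = wp_term w z - (2 * z / w^3 + 3 * z^2 / w^4 + 4 * z^3 / w^5 + 5 * z^4 / w^6)"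
      by (simp add: T_def algebra_simps)
    moreover have "cmod (wp_term w z - (2 * z / w^3 + 3 * z^2 / w^4 + 4 * z^3 / w^5 + 5 * z^4 / w^6))
        \<le> (34 * cmod z ^ 5) * (1 / cmod w ^ 7)"
      using small(2)[OF w] w by (intro wp_term_taylor_remainder) auto
    ultimately show "cmod (wp_term w z + T w) \<le> (34 * cmod z ^ 5) * (1 / cmod w ^ 7)"
      by (simp only:)
  qed
  then show ?thesis
    using eq by simp
qed

lemma cube_tail_expansion:
  assumes z: "z \<noteq> 0" "cmod z \<le> \<delta> / 2"
  shows "cmod (cube_tail z + 3 * G4 * z + 10 * G6 * z^3) \<le> 240 * cmod z ^ 4 * inverse_norm7_sum"
proof -
  note small = small_notin_lattice[OF z]
  define T where "T w = 1 * (1 / w^3) + (3 * z) * (1 / w^4) + (6 * z^2) * (1 / w^5) + (10 * z^3) * (1 / w^6)"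
    for w
  have terms: "(\<lambda>w. cube_term w z) summable_on \<Lambda> - {0}"
    using small by (intro terms_summable) auto
  have "cube_tail z + 3 * G4 * z + 10 * G6 * z^3 = cube_tail z + infsum T (\<Lambda> - {0})"
    unfolding T_def infsum_inverse_powers_3_to_6 by (simp add: algebra_simps)
  also have "\<dots> = (\<Sum>\<^sub>\<infinity>w\<in>\<Lambda> - {0}. cube_term w z + T w)"
    unfolding cube_tail_def T_def by (rule infsum_add[OF terms summable_inverse_powers_3_to_6, symmetric])
  finally have eq: "cube_tail z + 3 * G4 * z + 10 * G6 * z^3 = (\<Sum>\<^sub>\<infinity>w\<in>\<Lambda> - {0}. cube_term w z + T w)" .
  have "cmod (\<Sum>\<^sub>\<infinity>w\<in>\<Lambda> - {0}. cube_term w z + T w) \<le> (240 * cmod z ^ 4) * inverse_norm7_sum"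
  proof (rule norm_infsum_le_inverse_norm7)
    show "(\<lambda>w. cube_term w z + T w) summable_on \<Lambda> - {0}"
      unfolding T_def by (intro summable_on_add terms summable_inverse_powers_3_to_6)
    fix w assume w: "w \<in> \<Lambda> - {0}"
    have "cube_term w z + T w = cube_term w z + (1 / w^3 + 3 * z / w^4 + 6 * z^2 / w^5 + 10 * z^3 / w^6)"
      by (simp add: T_def)
    moreover have "cmod (cube_term w z + (1 / w^3 + 3 * z / w^4 + 6 * z^2 / w^5 + 10 * z^3 / w^6))
        \<le> (240 * cmod z ^ 4) * (1 / cmod w ^ 7)"
      using small(2)[OF w] w by (intro cube_term_taylor_remainder) auto
    ultimately show "cmod (cube_term w z + T w) \<le> (240 * cmod z ^ 4) * (1 / cmod w ^ 7)"
      by simp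
  qed
  then show ?thesis
    using eq by simp
qed

lemma eventually_small_at_0: "eventually (\<lambda>z. z \<noteq> 0 \<and> cmod z \<le> \<delta> / 2) (at 0)"
  unfolding eventually_at by (rule exI[of _ "\<delta> / 2"]) (auto simp: dist_norm delta_pos)

lemma Bfun_wp_tail_remainder: "Bfun (\<lambda>z. (wp_tail z - 3 * G4 * z^2 - 5 * G6 * z^4) / z^5) (at 0)"
proof (rule BfunI)
  show "eventually (\<lambda>z. norm ((wp_tail z - 3 * G4 * z^2 - 5 * G6 * z^4) / z^5) \<le> 34 * inverse_norm7_sum) (at 0)"
    using eventually_small_at_0
  proof eventually_elim
    case (elim z)
    then have "cmod z ^ 5 > 0"
      by simp
    with elim show ?case
      using wp_tail_expansion[of z] by (simp add: norm_divide norm_power divide_le_eq mult_ac)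
  qed
qed

lemma Bfun_cube_tail_remainder: "Bfun (\<lambda>z. (cube_tail z + 3 * G4 * z + 10 * G6 * z^3) / z^4) (at 0)"
proof (rule BfunI)
  show "eventually (\<lambda>z. norm ((cube_tail z + 3 * G4 * z + 10 * G6 * z^3) / z^4) \<le> 240 * inverse_norm7_sum) (at 0)"
    using eventually_small_at_0
  proof eventually_elim
    case (elim z)
    then have "cmod z ^ 4 > 0"
      by simp
    with elim show ?case
      using cube_tail_expansion[of z] by (simp add: norm_divide norm_power divide_le_eq mult_ac)
  qed
qed

definition wp_ode_defect :: "complex \<Rightarrow> complex" where
  "wp_ode_defect z = deriv \<wp> z ^ 2 - rpoly w1 w2 (\<wp> z)"

lemma wp_ode_defect_tendsto_0: "(wp_ode_defect \<longlongrightarrow> 0) (at 0)"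
proof -
  define a where "a = 3 * G4"
  define b where "b = 5 * G6"
  define p where "p z = (wp_tail z - 3 * G4 * z^2 - 5 * G6 * z^4) / z^5" for z
  define q where "q z = -2 * ((cube_tail z + 3 * G4 * z + 10 * G6 * z^3) / z^4)" for z
  define H where "H z = a + b * z^2 + p z * z^3" for z
  define H' where "H' z = 2 * a + 4 * b * z^2 + q z * z^3" for z
  define R where "R z = - 4 * q z - 12 * p z + z * (H' z ^ 2 - 12 * H z ^ 2 - 4 * z^4 * H z ^ 3 + 20 * a * H z)"
    for z
  have "Bfun p (at 0)" "Bfun q (at 0)"
    unfolding p_def q_def by (intro Bfun_intros Bfun_wp_tail_remainder Bfun_cube_tail_remainder)+
  then have "Bfun R (at 0)"
    unfolding R_def H_def H'_def by (intro Bfun_intros)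
  moreover have "Zfun (\<lambda>z::complex. z) (at 0)"
    using tendsto_Zfun_iff[of "\<lambda>z::complex. z" 0 "at 0"] tendsto_ident_at by simp
  ultimately have "Zfun (\<lambda>z. z * R z) (at 0)"
    by (intro bounded_bilinear.Zfun_prod_Bfun[OF bounded_bilinear_mult])
  then have "((\<lambda>z. z * R z) \<longlongrightarrow> 0) (at 0)"
    by (simp add: tendsto_Zfun_iff)
  moreover have "eventually (\<lambda>z. z * R z = wp_ode_defect z) (at 0)"
    using eventually_small_at_0
  proof eventually_elim
    case (elim z)
    then have z: "z \<noteq> 0" "z \<notin> \<Lambda>"
      using small_notin_lattice[of z] by auto
    have "\<wp> z = 1 / z^2 + z^2 * H z"
      using z by (simp add: wp_eq_tail H_def p_def a_def b_def field_simps)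
    moreover have "deriv \<wp> z = -2 / z^3 + z * H' z"
      using z by (simp add: deriv_wp cube_sum_eq_tail H'_def q_def a_def b_def field_simps) algebra
    moreover have "rpoly w1 w2 u = 4 * u^3 - 20 * a * u - 28 * b" for u
      by (simp add: rpoly_def g2_eq g3_eq a_def b_def)
    ultimately show ?case
      unfolding wp_ode_defect_def R_def using laurent_ode_identity[OF z(1) H_def H'_def] by simp
  qed
  ultimately show ?thesis
    by (rule tendsto_cong[THEN iffD1, rotated])
qed

lemma holomorphic_wp_ode_defect: "wp_ode_defect holomorphic_on - \<Lambda>"
  unfolding wp_ode_defect_def[abs_def] rpoly_def
  using holomorphic_deriv_wp holomorphic_wp open_Compl_lattice by (intro holomorphic_intros)

lemma wp_ode_defect_periodic: "\<omega> \<in> \<Lambda> \<Longrightarrow> z \<notin> \<Lambda> \<Longrightarrow> wp_ode_defect (z + \<omega>) = wp_ode_defect z"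
  by (simp add: wp_ode_defect_def deriv_wp_periodic wp_periodic)

theorem wp_ode:
  assumes "z \<notin> \<Lambda>"
  shows "deriv \<wp> z ^ 2 = rpoly w1 w2 (\<wp> z)"
proof -
  have lim: "(wp_ode_defect \<longlongrightarrow> 0) (at e)" if "e \<in> \<Lambda>" for e
    using tendsto_shift_periodic[OF finite_lattice_cball _ _ wp_ode_defect_tendsto_0, of e]
      add_in_lattice_iff[OF that] wp_ode_defect_periodic[OF that] by simp
  obtain c where c: "\<And>z. z \<notin> \<Lambda> \<Longrightarrow> wp_ode_defect z = c"
    by (rule elliptic_function_constant[OF finite_lattice_cball add_in_lattice_iff
          holomorphic_wp_ode_defect wp_ode_defect_periodic wp_ode_defect_periodic])
      (use w1_in_lattice w2_in_lattice lim in auto)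
  have "eventually (\<lambda>x. wp_ode_defect x = c) (at 0)"
    using eventually_notin_locally_finite[OF finite_lattice_cball[of 0 1]] by eventually_elim (simp add: c)
  then have "((\<lambda>x. c) \<longlongrightarrow> 0) (at (0::complex))"
    using wp_ode_defect_tendsto_0 by (rule tendsto_cong[THEN iffD1])
  then have "c = 0"
    using tendsto_const tendsto_unique by (metis trivial_limit_at)
  then show ?thesis
    using c[OF assms] by (simp add: wp_ode_defect_def)
qed

theorem deriv2_wp:
  assumes z: "z \<notin> \<Lambda>" and nz: "deriv \<wp> z \<noteq> 0"
  shows "deriv (deriv \<wp>) z = rpoly' w1 w2 (\<wp> z) / 2"
proof -
  have z': "z \<in> - \<Lambda>"
    using z by simp
  have "((\<lambda>x. deriv \<wp> x ^ 2) has_field_derivative 2 * deriv \<wp> z * deriv (deriv \<wp>) z) (at z)"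
    using holomorphic_derivI[OF holomorphic_deriv_wp open_Compl_lattice z']
    by (auto intro!: derivative_eq_intros)
  then have "((\<lambda>x. rpoly w1 w2 (\<wp> x)) has_field_derivative 2 * deriv \<wp> z * deriv (deriv \<wp>) z) (at z)"
    by (rule has_field_derivative_transform_within_open[OF _ open_Compl_lattice z']) (simp add: wp_ode)
  moreover have "((\<lambda>x. rpoly w1 w2 (\<wp> x)) has_field_derivative rpoly' w1 w2 (\<wp> z) * deriv \<wp> z) (at z)"
    unfolding rpoly_def rpoly'_def using holomorphic_derivI[OF holomorphic_wp open_Compl_lattice z']
    by (auto intro!: derivative_eq_intros simp: algebra_simps power2_eq_square power3_eq_cube)
  ultimately have "2 * deriv \<wp> z * deriv (deriv \<wp>) z = rpoly' w1 w2 (\<wp> z) * deriv \<wp> z"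
    by (rule DERIV_unique)
  then show ?thesis
    using nz by (simp add: field_simps)
qed

section \<open>The addition and duplication formulas for \<open>\<zeta>\<close>\<close>

lemma isCont_wp: "z \<notin> \<Lambda> \<Longrightarrow> isCont \<wp> z"
  using holomorphic_wp open_Compl_lattice
  by (meson ComplI holomorphic_on_imp_continuous_on continuous_on_eq_continuous_at)

lemma isCont_wzeta: "z \<notin> \<Lambda> \<Longrightarrow> isCont \<zeta> z"
  using holomorphic_wzeta open_Compl_lattice
  by (meson ComplI holomorphic_on_imp_continuous_on continuous_on_eq_continuous_at)

lemma isCont_deriv_wp: "z \<notin> \<Lambda> \<Longrightarrow> isCont (deriv \<wp>) z"
  using holomorphic_deriv_wp open_Compl_lattice
  by (meson ComplI holomorphic_on_imp_continuous_on continuous_on_eq_continuous_at)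

lemma isCont_wp_tail: "z \<notin> \<Lambda> - {0} \<Longrightarrow> isCont wp_tail z"
  using holomorphic_wp_tail open_Compl_lattice_nonzero
  by (meson ComplI holomorphic_on_imp_continuous_on continuous_on_eq_continuous_at)

lemma isCont_zeta_tail: "z \<notin> \<Lambda> - {0} \<Longrightarrow> isCont zeta_tail z"
  using holomorphic_zeta_tail open_Compl_lattice_nonzero
  by (meson ComplI holomorphic_on_imp_continuous_on continuous_on_eq_continuous_at)

lemma isCont_deriv_wp_tail: "z \<notin> \<Lambda> - {0} \<Longrightarrow> isCont (deriv wp_tail) z"
  using holomorphic_deriv[OF holomorphic_wp_tail open_Compl_lattice_nonzero] open_Compl_lattice_nonzero
  by (meson ComplI holomorphic_on_imp_continuous_on continuous_on_eq_continuous_at)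

lemma wp_tail_0: "wp_tail 0 = 0"
  unfolding wp_tail_def by (rule infsum_0) (simp add: wp_term_def)

lemma zeta_tail_0: "zeta_tail 0 = 0"
  unfolding zeta_tail_def by (rule infsum_0) (simp add: zeta_term_def)

lemma deriv_zeta_tail_0: "deriv zeta_tail 0 = 0"
  using DERIV_imp_deriv[OF has_field_derivative_zeta_tail[of 0]] wp_tail_0 by simp

lemma holomorphic_wzeta_shift: "(\<lambda>z. \<zeta> (z + c)) holomorphic_on {z. z + c \<notin> \<Lambda>}"
proof -
  have "(\<zeta> \<circ> (\<lambda>z. z + c)) holomorphic_on {z. z + c \<notin> \<Lambda>}"
    by (rule holomorphic_on_compose_gen[OF _ holomorphic_wzeta]) (auto intro: holomorphic_intros)
  then show ?thesis
    by (simp add: o_def)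
qed

lemma open_shift_Compl_lattice: "open {z. z + c \<notin> \<Lambda>}"
proof -
  have "{z. z + c \<notin> \<Lambda>} = (\<lambda>z. z + c) -` (- \<Lambda>)"
    by auto
  then show ?thesis
    using open_Compl_lattice by (simp add: continuous_open_vimage)
qed

lemma notin_lattice_if_wp_ne:
  assumes "x \<notin> \<Lambda>" "y \<notin> \<Lambda>" "\<wp> x \<noteq> \<wp> y"
  shows "x - y \<notin> \<Lambda>" "x + y \<notin> \<Lambda>"
proof -
  show "x - y \<notin> \<Lambda>"
    using wp_periodic[of "x - y" y] assms by auto
  show "x + y \<notin> \<Lambda>"
    using wp_periodic[of "x + y" "- y"] wp_even[of y] assms uminus_in_lattice_iff[of y] by auto
qed

text \<open>The addition formula says that the following function vanishes identically.\<close>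

definition addition_defect :: "complex \<Rightarrow> complex \<Rightarrow> complex" where
  "addition_defect y z = (\<wp> z - \<wp> y) * (\<zeta> (z + y) + \<zeta> (z - y) - 2 * \<zeta> z) - deriv \<wp> z"

definition addition_poles :: "complex \<Rightarrow> complex set" where
  "addition_poles y = {z. z \<in> \<Lambda> \<or> z - y \<in> \<Lambda> \<or> z + y \<in> \<Lambda>}"

lemma notin_addition_poles:
  "z \<notin> addition_poles y \<longleftrightarrow> z \<notin> \<Lambda> \<and> z - y \<notin> \<Lambda> \<and> z + y \<notin> \<Lambda>"
  by (simp add: addition_poles_def)

lemma finite_addition_poles_cball: "finite (addition_poles y \<inter> cball z 1)"
proof -
  have "addition_poles y \<inter> cball z 1 \<subseteq>
      \<Lambda> \<inter> cball z 1 \<union> (\<lambda>w. w + y) ` (\<Lambda> \<inter> cball (z - y) 1) \<union> (\<lambda>w. w - y) ` (\<Lambda> \<inter> cball (z + y) 1)"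
  proof
    fix u assume u: "u \<in> addition_poles y \<inter> cball z 1"
    then have "dist (z - y) (u - y) \<le> 1" "dist (z + y) (u + y) \<le> 1"
      by (simp_all add: dist_norm)
    then show "u \<in> \<Lambda> \<inter> cball z 1 \<union> (\<lambda>w. w + y) ` (\<Lambda> \<inter> cball (z - y) 1) \<union> (\<lambda>w. w - y) ` (\<Lambda> \<inter> cball (z + y) 1)"
      using u unfolding addition_poles_def by (auto intro: image_eqI[of u _ "u - y"] image_eqI[of u _ "u + y"])
  qed
  then show ?thesis
    by (rule finite_subset) (intro finite_UnI finite_imageI finite_lattice_cball)
qed

lemma addition_poles_periodic: "\<omega> \<in> \<Lambda> \<Longrightarrow> z + \<omega> \<in> addition_poles y \<longleftrightarrow> z \<in> addition_poles y"
  using add_in_lattice_iff[of \<omega> z] add_in_lattice_iff[of \<omega> "z - y"] add_in_lattice_iff[of \<omega> "z + y"]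
  by (simp add: addition_poles_def algebra_simps)

lemma addition_defect_periodic:
  assumes "\<omega> \<in> \<Lambda>" "z \<notin> addition_poles y"
  shows "addition_defect y (z + \<omega>) = addition_defect y z"
proof -
  obtain \<eta> where \<eta>: "\<And>z. z \<notin> \<Lambda> \<Longrightarrow> \<zeta> (z + \<omega>) = \<zeta> z + \<eta>"
    using wzeta_quasi_periodic[OF assms(1)] by blast
  have z: "z \<notin> \<Lambda>" "z - y \<notin> \<Lambda>" "z + y \<notin> \<Lambda>"
    using assms(2) by (simp_all add: notin_addition_poles)
  have "\<zeta> (z + \<omega> + y) = \<zeta> (z + y) + \<eta>" "\<zeta> (z + \<omega> - y) = \<zeta> (z - y) + \<eta>"
    using \<eta>[OF z(3)] \<eta>[OF z(2)] by (simp_all add: algebra_simps)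
  then show ?thesis
    unfolding addition_defect_def using \<eta>[OF z(1)] wp_periodic[OF assms(1) z(1)] deriv_wp_periodic[OF assms(1) z(1)]
    by (simp add: algebra_simps)
qed

lemma addition_defect_odd:
  assumes "z \<notin> \<Lambda>"
  shows "addition_defect y (- z) = - addition_defect y z"
proof -
  have "- z + y = - (z - y)" "- z - y = - (z + y)"
    by simp_all
  then have "\<zeta> (- z + y) = - \<zeta> (z - y)" "\<zeta> (- z - y) = - \<zeta> (z + y)"
    by (simp_all only: wzeta_odd)
  then show ?thesis
    unfolding addition_defect_def using wzeta_odd[of z] wp_even[of z] deriv_wp_odd[OF assms]
    by (simp add: algebra_simps)
qed

lemma holomorphic_addition_defect: "addition_defect y holomorphic_on - addition_poles y"
proof -
  have "- addition_poles y \<subseteq> - \<Lambda>" "- addition_poles y \<subseteq> {z. z + y \<notin> \<Lambda>}"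
    "- addition_poles y \<subseteq> {z. z + - y \<notin> \<Lambda>}"
    by (auto simp: addition_poles_def)
  then show ?thesis
    unfolding addition_defect_def[abs_def] using holomorphic_wzeta_shift[of y] holomorphic_wzeta_shift[of "- y"]
    by (intro holomorphic_intros holomorphic_on_subset[OF holomorphic_wp] holomorphic_on_subset[OF holomorphic_wzeta]
        holomorphic_on_subset[OF holomorphic_deriv_wp]) (auto elim: holomorphic_on_subset)
qed

lemma has_field_derivative_wzeta_pair:
  assumes y: "y \<notin> \<Lambda>"
  shows "((\<lambda>z. \<zeta> (z + y) + \<zeta> (z - y)) has_field_derivative - 2 * \<wp> y) (at 0)"
proof -
  have "((\<lambda>z. \<zeta> (z + y)) has_field_derivative - \<wp> y) (at 0)"
    using DERIV_shift[of \<zeta> "- \<wp> y" 0 y] has_field_derivative_wzeta[OF y] by simp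
  moreover have "((\<lambda>z. \<zeta> (z + - y)) has_field_derivative - \<wp> (- y)) (at 0)"
    using DERIV_shift[of \<zeta> "- \<wp> (- y)" 0 "- y"] has_field_derivative_wzeta[of "- y"] y
      uminus_in_lattice_iff[of y] by simp
  ultimately have "((\<lambda>z. \<zeta> (z + y) + \<zeta> (z - y)) has_field_derivative - \<wp> y + - \<wp> (- y)) (at 0)"
    using DERIV_add by force
  then show ?thesis
    by (simp add: wp_even)
qed

lemma addition_defect_tendsto_at_0:
  assumes y: "y \<notin> \<Lambda>"
  shows "\<exists>l. (addition_defect y \<longlongrightarrow> l) (at 0)"
proof -
  define U where "U = {z. z + y \<notin> \<Lambda>} \<inter> {z. z + - y \<notin> \<Lambda>}"
  define s where "s z = \<zeta> (z + y) + \<zeta> (z - y)" for z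
  define c where "c = \<wp> y"
  have U: "open U" "0 \<in> U"
    using open_shift_Compl_lattice[of y] open_shift_Compl_lattice[of "- y"] y uminus_in_lattice_iff[of y]
    by (auto simp: U_def)
  have s_hol: "s holomorphic_on U"
    unfolding s_def[abs_def] U_def using holomorphic_wzeta_shift[of y] holomorphic_wzeta_shift[of "- y"]
    by (intro holomorphic_intros) (auto elim: holomorphic_on_subset)
  have s_0: "s 0 = 0"
    by (simp add: s_def wzeta_odd)
  have deriv_s_0: "deriv s 0 = - 2 * c"
    unfolding s_def[abs_def] c_def by (rule DERIV_imp_deriv[OF has_field_derivative_wzeta_pair[OF y]])
  text \<open>Near \<open>0\<close>, \<open>addition_defect y\<close> is a combination of difference quotients of functions
    holomorphic at \<open>0\<close>; the poles of order three and one cancel because \<open>s\<close> and \<open>zeta_tail\<close> are odd.\<close>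
  define F where "F x = (s x - s 0 - deriv s 0 * (x - 0)) / (x - 0)^2
      - 2 * ((zeta_tail x - zeta_tail 0 - deriv zeta_tail 0 * (x - 0)) / (x - 0)^2)
      - 2 * ((wp_tail x - wp_tail 0) / (x - 0)) + (wp_tail x - c) * (s x - 2 * zeta_tail x)
      - deriv wp_tail x" for x
  have "isCont s 0"
    using s_hol U by (meson holomorphic_on_imp_continuous_on continuous_on_eq_continuous_at)
  then have lim: "(F \<longlongrightarrow> deriv (deriv s) 0 / 2 - 2 * (deriv (deriv zeta_tail) 0 / 2) - 2 * (-2 * cube_tail 0)
      + (wp_tail 0 - c) * (s 0 - 2 * zeta_tail 0) - deriv wp_tail 0) (at 0)"
    unfolding F_def[abs_def] using has_field_derivative_wp_tail[of 0]
    by (intro tendsto_intros second_difference_quotient_tendsto[OF s_hol U]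
        second_difference_quotient_tendsto[OF holomorphic_zeta_tail open_Compl_lattice_nonzero]
        isCont_wp_tail[THEN isContD] isCont_zeta_tail[THEN isContD] isCont_deriv_wp_tail[THEN isContD])
      (auto simp: has_field_derivative_iff isCont_def)
  have "eventually (\<lambda>x. F x = addition_defect y x) (at 0)"
    using eventually_notin_locally_finite[OF finite_lattice_cball[of 0 1]]
  proof eventually_elim
    case (elim x)
    then have "x \<noteq> 0"
      using zero_in_lattice by auto
    have defect: "addition_defect y x = (\<wp> x - c) * (s x - 2 * \<zeta> x) - deriv \<wp> x"
      by (simp add: addition_defect_def s_def c_def)
    have deriv_wp_x: "deriv \<wp> x = -2 / x^3 + deriv wp_tail x"
      using elim DERIV_imp_deriv[OF has_field_derivative_wp_tail[of x]]
      by (simp add: deriv_wp cube_sum_eq_tail algebra_simps)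
    show ?case
      unfolding F_def defect deriv_wp_x wp_eq_tail[of x] wzeta_eq_tail[of x]
        s_0 deriv_s_0 deriv_zeta_tail_0 zeta_tail_0 wp_tail_0
      using \<open>x \<noteq> 0\<close> by (simp add: field_simps power2_eq_square power3_eq_cube)
  qed
  from tendsto_cong[OF this, THEN iffD1, OF lim] show ?thesis
    by blast
qed

lemma addition_defect_tendsto_at_y:
  assumes y: "y \<notin> \<Lambda>" "2 * y \<notin> \<Lambda>"
  shows "\<exists>l. (addition_defect y \<longlongrightarrow> l) (at y)"
proof -
  define q where "q x = (\<wp> x - \<wp> y) / (x - y)" for x
  text \<open>The simple pole of \<open>\<zeta>(z - y)\<close> at \<open>y\<close> is cancelled by the zero of \<open>\<wp> z - \<wp> y\<close>.\<close>
  define F where "F x = q x * (1 + (x - y) * zeta_tail (x - y)) + (\<wp> x - \<wp> y) * (\<zeta> (x + y) - 2 * \<zeta> x)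
    - deriv \<wp> x" for x
  have q: "(q \<longlongrightarrow> deriv \<wp> y) (at y)"
    using holomorphic_derivI[OF holomorphic_wp open_Compl_lattice, of y UNIV] y
    by (simp add: has_field_derivative_iff q_def[abs_def])
  have tail: "((\<lambda>x. zeta_tail (x - y)) \<longlongrightarrow> zeta_tail (y - y)) (at y)"
    by (rule isCont_tendsto_compose[OF _ tendsto_diff[OF tendsto_ident_at tendsto_const]])
      (simp add: isCont_zeta_tail)
  have "y + y \<notin> \<Lambda>"
    using y(2) by (metis mult_2)
  then have shifted: "((\<lambda>x. \<zeta> (x + y)) \<longlongrightarrow> \<zeta> (y + y)) (at y)"
    by (rule isCont_tendsto_compose[OF isCont_wzeta tendsto_add[OF tendsto_ident_at tendsto_const]])
  have cont: "(\<wp> \<longlongrightarrow> \<wp> y) (at y)" "(\<zeta> \<longlongrightarrow> \<zeta> y) (at y)" "(deriv \<wp> \<longlongrightarrow> deriv \<wp> y) (at y)"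
    using isCont_wp[OF y(1)] isCont_wzeta[OF y(1)] isCont_deriv_wp[OF y(1)] by (simp_all add: isCont_def)
  have lim: "(F \<longlongrightarrow> deriv \<wp> y * (1 + (y - y) * zeta_tail (y - y))
      + (\<wp> y - \<wp> y) * (\<zeta> (y + y) - 2 * \<zeta> y) - deriv \<wp> y) (at y)"
    unfolding F_def[abs_def] by (intro tendsto_intros q tail shifted cont)
  have "eventually (\<lambda>x. F x = addition_defect y x) (at y)"
    unfolding eventually_at
  proof (intro exI[of _ 1] conjI ballI impI)
    fix x assume "x \<noteq> y \<and> dist x y < 1"
    then have "x - y \<noteq> 0"
      by simp
    then show "F x = addition_defect y x"
      unfolding F_def addition_defect_def q_def wzeta_eq_tail[of "x - y"] by (simp add: field_simps)
  qed simp
  from tendsto_cong[OF this, THEN iffD1, OF lim] show ?thesis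
    by blast
qed

lemma addition_defect_tendsto_at_pole:
  assumes y: "y \<notin> \<Lambda>" "2 * y \<notin> \<Lambda>" and e: "e \<in> addition_poles y"
  shows "\<exists>l. (addition_defect y \<longlongrightarrow> l) (at e)"
proof -
  have shift: "\<exists>l. (addition_defect y \<longlongrightarrow> l) (at e)"
    if "(addition_defect y \<longlongrightarrow> l) (at b)" "e - b \<in> \<Lambda>" for b l
    using tendsto_shift_periodic[where E = "addition_poles y" and \<omega> = "e - b", OF finite_addition_poles_cball
        addition_poles_periodic[OF that(2)] addition_defect_periodic[OF that(2)] that(1)]
    by auto
  obtain l0 where l0: "(addition_defect y \<longlongrightarrow> l0) (at 0)"
    using addition_defect_tendsto_at_0[OF y(1)] by blast
  obtain l where l: "(addition_defect y \<longlongrightarrow> l) (at y)"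
    using addition_defect_tendsto_at_y[OF y] by blast
  have "eventually (\<lambda>z. addition_defect y (- z) = - addition_defect y z) (at (- y))"
    using eventually_notin_locally_finite[OF finite_lattice_cball[of "- y" 1]]
    by eventually_elim (rule addition_defect_odd)
  then have "(addition_defect y \<longlongrightarrow> - l) (at (- y))"
    by (rule tendsto_at_uminus_odd[OF l])
  then show ?thesis
    using e shift[OF l0, of] shift[OF l] shift[of "- l" "- y"] by (auto simp: addition_poles_def)
qed

theorem wzeta_addition:
  assumes y: "y \<notin> \<Lambda>" "deriv \<wp> y \<noteq> 0" and x: "x \<notin> addition_poles y"
  shows "(\<wp> x - \<wp> y) * (\<zeta> (x + y) + \<zeta> (x - y) - 2 * \<zeta> x) = deriv \<wp> x"
proof -
  obtain c where c: "\<And>z. z \<notin> addition_poles y \<Longrightarrow> addition_defect y z = c"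
    by (rule elliptic_function_constant[OF finite_addition_poles_cball addition_poles_periodic
          holomorphic_addition_defect])
      (use addition_defect_periodic w1_in_lattice w2_in_lattice
        addition_defect_tendsto_at_pole[OF y(1) double_notin_lattice[OF y]] in auto)
  have "countable (addition_poles y)"
  proof (rule countable_subset)
    show "addition_poles y \<subseteq> \<Lambda> \<union> (\<lambda>w. w + y) ` \<Lambda> \<union> (\<lambda>w. w - y) ` \<Lambda>"
      by (auto simp: addition_poles_def intro: image_eqI[of _ _ "_ - y"] image_eqI[of _ _ "_ + y"])
  qed (intro countable_Un countable_image countable_lattice)
  then obtain z where z: "z \<notin> addition_poles y"
    using uncountable_UNIV_complex by (metis UNIV_I countable_subset subsetI)
  text \<open>An odd constant vanishes.\<close>
  moreover have "- z \<notin> addition_poles y"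
  proof -
    have "- z - y = - (z + y)" "- z + y = - (z - y)"
      by simp_all
    then show ?thesis
      using z unfolding addition_poles_def by (metis uminus_in_lattice_iff mem_Collect_eq)
  qed
  ultimately have "c = 0"
    using c[of z] c[of "- z"] addition_defect_odd[of z] by (simp add: addition_poles_def)
  then show ?thesis
    using c[OF x] by (simp add: addition_defect_def)
qed

lemma wzeta_addition_quotient:
  assumes "x \<notin> \<Lambda>" "y \<notin> \<Lambda>" "deriv \<wp> y \<noteq> 0" "\<wp> x \<noteq> \<wp> y"
  shows "\<zeta> (x + y) + \<zeta> (x - y) - 2 * \<zeta> x = deriv \<wp> x / (\<wp> x - \<wp> y)"
proof -
  have "x \<notin> addition_poles y"
    using assms notin_lattice_if_wp_ne[of x y] by (simp add: notin_addition_poles)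
  from wzeta_addition[OF assms(2,3) this] show ?thesis
    using assms(4) by (simp add: eq_divide_eq mult.commute)
qed

lemma wzeta_sum_eq_difference_quotients:
  assumes "x \<notin> \<Lambda>" "y \<notin> \<Lambda>" "deriv \<wp> y \<noteq> 0" "\<wp> y \<noteq> \<wp> x"
  shows "\<zeta> (x + y) - 2 * \<zeta> x
    = ((\<wp> y - \<wp> x - deriv \<wp> x * (y - x)) / (y - x)^2) / ((\<wp> y - \<wp> x) / (y - x)) - zeta_tail (x - y)"
proof -
  have yx: "y - x \<noteq> 0" and wp_yx: "\<wp> y - \<wp> x \<noteq> 0"
    using assms(4) by auto
  have "\<zeta> (x + y) - 2 * \<zeta> x = deriv \<wp> x / (\<wp> x - \<wp> y) - 1 / (x - y) - zeta_tail (x - y)"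
    using wzeta_addition_quotient[OF assms(1-3)] assms(4) wzeta_eq_tail[of "x - y"] by (simp add: algebra_simps)
  also have "deriv \<wp> x / (\<wp> x - \<wp> y) - 1 / (x - y) = 1 / (y - x) - deriv \<wp> x / (\<wp> y - \<wp> x)"
  proof -
    have "deriv \<wp> x / (\<wp> x - \<wp> y) = - (deriv \<wp> x / (\<wp> y - \<wp> x))" "1 / (x - y) = - (1 / (y - x))"
      using divide_minus_right[of "deriv \<wp> x" "\<wp> y - \<wp> x"] divide_minus_right[of 1 "y - x"] by simp_all
    then show ?thesis
      by simp
  qed
  also have "\<dots> = ((\<wp> y - \<wp> x - deriv \<wp> x * (y - x)) / (y - x)^2) / ((\<wp> y - \<wp> x) / (y - x))"
  proof -
    have "((q - d * p) / p^2) / (q / p) = 1 / p - d / q" if "p \<noteq> 0" "q \<noteq> 0" for p q d :: complex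
      using that by (simp add: field_simps power2_eq_square)
    from this[OF yx wp_yx, symmetric] show ?thesis .
  qed
  finally show ?thesis .
qed

theorem wzeta_duplication:
  assumes x: "x \<notin> \<Lambda>" "deriv \<wp> x \<noteq> 0"
  shows "\<zeta> (2 * x) - 2 * \<zeta> x = deriv (deriv \<wp>) x / (2 * deriv \<wp> x)"
proof -
  define A where "A y = (\<wp> y - \<wp> x - deriv \<wp> x * (y - x)) / (y - x)^2" for y
  define B where "B y = (\<wp> y - \<wp> x) / (y - x)" for y
  have x': "x \<in> - \<Lambda>"
    using x by simp
  have double: "x + x \<notin> \<Lambda>"
    using double_notin_lattice[OF x] by (metis mult_2)
  have A: "(A \<longlongrightarrow> deriv (deriv \<wp>) x / 2) (at x)"
    unfolding A_def[abs_def] by (rule second_difference_quotient_tendsto[OF holomorphic_wp open_Compl_lattice x'])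
  have B: "(B \<longlongrightarrow> deriv \<wp> x) (at x)"
    using holomorphic_derivI[OF holomorphic_wp open_Compl_lattice x', of UNIV]
    by (simp add: has_field_derivative_iff B_def[abs_def])
  have tail: "((\<lambda>y. zeta_tail (x - y)) \<longlongrightarrow> zeta_tail (x - x)) (at x)"
    by (rule isCont_tendsto_compose[OF _ tendsto_diff[OF tendsto_const tendsto_ident_at]])
      (simp add: isCont_zeta_tail)
  have lim: "((\<lambda>y. A y / B y - zeta_tail (x - y)) \<longlongrightarrow> (deriv (deriv \<wp>) x / 2) / deriv \<wp> x - zeta_tail (x - x))
      (at x)"
    by (intro tendsto_intros A B tail x(2))
  have "eventually (\<lambda>y. A y / B y - zeta_tail (x - y) = \<zeta> (x + y) - 2 * \<zeta> x) (at x)"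
    using eventually_notin_locally_finite[OF finite_lattice_cball[of x 1]]
      tendsto_imp_eventually_ne[OF isCont_deriv_wp[OF x(1), unfolded isCont_def] x(2)]
      tendsto_imp_eventually_ne[OF B x(2)]
    by eventually_elim (auto simp: A_def B_def wzeta_sum_eq_difference_quotients x(1))
  from tendsto_cong[OF this, THEN iffD1, OF lim]
  have "((\<lambda>y. \<zeta> (x + y) - 2 * \<zeta> x) \<longlongrightarrow> deriv (deriv \<wp>) x / (2 * deriv \<wp> x)) (at x)"
    using zeta_tail_0 by simp
  moreover have "((\<lambda>y. \<zeta> (x + y) - 2 * \<zeta> x) \<longlongrightarrow> \<zeta> (x + x) - 2 * \<zeta> x) (at x)"
    by (intro tendsto_intros isCont_tendsto_compose[OF isCont_wzeta[OF double]])
  ultimately have "\<zeta> (x + x) - 2 * \<zeta> x = deriv (deriv \<wp>) x / (2 * deriv \<wp> x)"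
    using tendsto_unique by (metis trivial_limit_at)
  moreover have "2 * x = x + x"
    by simp
  ultimately show ?thesis
    by (simp only:)
qed

section \<open>The two lattice equations\<close>

lemma wzeta_combination_eq:
  assumes X: "X \<notin> \<Lambda>" "deriv \<wp> X \<noteq> 0" and Y: "Y \<notin> \<Lambda>" "deriv \<wp> Y \<noteq> 0"
    and W: "W \<notin> \<Lambda>" "deriv \<wp> W \<noteq> 0" and ne: "\<wp> X \<noteq> \<wp> Y" "\<wp> X \<noteq> \<wp> W"
  shows "\<zeta> (Y + X) - \<zeta> (Y - X) + \<zeta> (X + W) + \<zeta> (X - W) - 2 * \<zeta> (2 * X)
    = deriv \<wp> X * (1 / (\<wp> X - \<wp> Y) + 1 / (\<wp> X - \<wp> W)) - deriv (deriv \<wp>) X / deriv \<wp> X"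
proof -
  have "\<zeta> (Y - X) = - \<zeta> (X - Y)"
    using wzeta_odd[of "X - Y"] by simp
  then have "\<zeta> (Y + X) - \<zeta> (Y - X) + \<zeta> (X + W) + \<zeta> (X - W) - 2 * \<zeta> (2 * X)
      = (\<zeta> (X + Y) + \<zeta> (X - Y) - 2 * \<zeta> X) + (\<zeta> (X + W) + \<zeta> (X - W) - 2 * \<zeta> X)
        - 2 * (\<zeta> (2 * X) - 2 * \<zeta> X)"
    by (simp add: algebra_simps)
  also have "\<dots> = deriv \<wp> X / (\<wp> X - \<wp> Y) + deriv \<wp> X / (\<wp> X - \<wp> W)
      - 2 * (deriv (deriv \<wp>) X / (2 * deriv \<wp> X))"
    by (simp only: wzeta_addition_quotient[OF X(1) Y ne(1)] wzeta_addition_quotient[OF X(1) W ne(2)] wzeta_duplication[OF X])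
  finally show ?thesis
    by (simp add: algebra_simps)
qed

lemma zeta_equation_iff_wp_equation:
  assumes X: "X \<notin> \<Lambda>" "deriv \<wp> X \<noteq> 0" and Y: "Y \<notin> \<Lambda>" "deriv \<wp> Y \<noteq> 0"
    and W: "W \<notin> \<Lambda>" "deriv \<wp> W \<noteq> 0" and ne: "\<wp> X \<noteq> \<wp> Y" "\<wp> X \<noteq> \<wp> W"
    and v: "v^2 \<noteq> 1"
  shows "a / (v^2 - 1) = \<zeta> (Y + X) - \<zeta> (Y - X) + \<zeta> (X + W) + \<zeta> (X - W) - 2 * \<zeta> (2 * X)
    \<longleftrightarrow> (v * (v * deriv (deriv \<wp>) X) + a * deriv \<wp> X - rpoly' w1 w2 (\<wp> X) / 2)
          / ((v * deriv \<wp> X)^2 - rpoly w1 w2 (\<wp> X))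
        = 1 / (\<wp> X - \<wp> Y) + 1 / (\<wp> X - \<wp> W)"
proof -
  define p1 where "p1 = deriv \<wp> X"
  define p2 where "p2 = deriv (deriv \<wp>) X"
  define S where "S = 1 / (\<wp> X - \<wp> Y) + 1 / (\<wp> X - \<wp> W)"
  have p1: "p1 \<noteq> 0" and e: "v^2 - 1 \<noteq> 0"
    using X v by (simp_all add: p1_def)
  have r: "rpoly w1 w2 (\<wp> X) = p1^2"
    using wp_ode[OF X(1)] by (simp add: p1_def)
  have r': "rpoly' w1 w2 (\<wp> X) = 2 * p2"
    unfolding p2_def deriv2_wp[OF X] by simp
  have "(v * (v * p2) + a * p1 - rpoly' w1 w2 (\<wp> X) / 2) / ((v * p1)^2 - rpoly w1 w2 (\<wp> X))
      = p2 / p1^2 + a / (p1 * (v^2 - 1))"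
    unfolding r r' using p1 e by (simp add: field_simps power2_eq_square)
  moreover have "(a / (v^2 - 1) = p1 * S - p2 / p1) \<longleftrightarrow> (p2 / p1^2 + a / (p1 * (v^2 - 1)) = S)"
  proof -
    have "(p2 / p1^2 + a / (p1 * (v^2 - 1)) = S) \<longleftrightarrow> p1 * (p2 / p1^2 + a / (p1 * (v^2 - 1))) = p1 * S"
      using p1 by simp
    also have "p1 * (p2 / p1^2 + a / (p1 * (v^2 - 1))) = p2 / p1 + a / (v^2 - 1)"
      using p1 e by (simp add: field_simps power2_eq_square)
    finally show ?thesis
      by (auto simp: algebra_simps)
  qed
  ultimately show ?thesis
    using wzeta_combination_eq[OF X Y W ne] by (simp add: p1_def p2_def S_def)
qed

lemma has_vector_derivative_wp_comp:
  assumes "(x has_vector_derivative x') (at t)" "x t \<notin> \<Lambda>"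
  shows "((\<lambda>s. \<wp> (x s)) has_vector_derivative x' * deriv \<wp> (x t)) (at t)"
  using field_vector_diff_chain_at[OF assms(1) holomorphic_derivI[OF holomorphic_wp open_Compl_lattice]] assms(2)
  by (simp add: o_def)

lemma has_vector_derivative_deriv_wp_comp:
  assumes "(x has_vector_derivative x') (at t)" "x t \<notin> \<Lambda>"
  shows "((\<lambda>s. deriv \<wp> (x s)) has_vector_derivative x' * deriv (deriv \<wp>) (x t)) (at t)"
  using field_vector_diff_chain_at[OF assms(1) holomorphic_derivI[OF holomorphic_deriv_wp open_Compl_lattice]]
    assms(2)
  by (simp add: o_def)

end

theorem mainTheorem16:
  fixes w1 w2 :: complex
    and x xd xdd :: "int \<Rightarrow> real \<Rightarrow> complex"
  assumes per: "nondeg_periods w1 w2"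
    and dx: "\<And>k t. (x k has_vector_derivative xd k t) (at t)"
    and dxd: "\<And>k t. (xd k has_vector_derivative xdd k t) (at t)"
    and nl: "\<And>k t. x k t \<notin> lattice w1 w2"
    and ndot: "\<And>k t. (xd k t) ^ 2 \<noteq> 1"
    and nwp': "\<And>k t. deriv (wp w1 w2) (x k t) \<noteq> 0"
    and ndist: "\<And>k t. wp w1 w2 (x k t) \<noteq> wp w1 w2 (x (k + 1) t)"
  shows "(\<forall>k t. xdd k t / ((xd k t) ^ 2 - 1) =
            wzeta w1 w2 (x (k + 1) t + x k t) - wzeta w1 w2 (x (k + 1) t - x k t)
          + wzeta w1 w2 (x k t + x (k - 1) t) + wzeta w1 w2 (x k t - x (k - 1) t)
          - 2 * wzeta w1 w2 (2 * x k t))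
    \<longleftrightarrow>
    (\<forall>k t. (let u = (\<lambda>j s. wp w1 w2 (x j s));
               ud = vector_derivative (u k) (at t);
               udd = vector_derivative (\<lambda>s. vector_derivative (u k) (at s)) (at t)
           in (udd - rpoly' w1 w2 (u k t) / 2) / (ud ^ 2 - rpoly w1 w2 (u k t))
              = 1 / (u k t - u (k + 1) t) + 1 / (u k t - u (k - 1) t)))"
proof -
  interpret period_lattice w1 w2
    by unfold_locales (rule per)
  have ud: "vector_derivative (\<lambda>s. \<wp> (x k s)) (at s) = xd k s * deriv \<wp> (x k s)" for k s
    by (rule vector_derivative_at[OF has_vector_derivative_wp_comp[OF dx nl]])
  have udd: "vector_derivative (\<lambda>s. xd k s * deriv \<wp> (x k s)) (at t)
      = xd k t * (xd k t * deriv (deriv \<wp>) (x k t)) + xdd k t * deriv \<wp> (x k t)" for k t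
    by (rule vector_derivative_at[OF has_vector_derivative_mult[OF dxd has_vector_derivative_deriv_wp_comp[OF dx nl]]])
  have "\<wp> (x k t) \<noteq> \<wp> (x (k - 1) t)" for k t
    using ndist[of "k - 1" t] by auto
  then show ?thesis
    unfolding Let_def ud udd
    using zeta_equation_iff_wp_equation[OF nl nwp' nl nwp' nl nwp' ndist _ ndot]
    by (simp add: mult.commute)
qed

end
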